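(* For each $L\in\mathbb{N}$ let $(\eta^L(t))_{t\in\mathbb{Z}_+}$ be the RBB process with $L$ bins, with random initial state $\eta^L(0)\in\mathbb{Z}_+^L$ whose law is finitely exchangeable (invariant under permutations of the $L$ coordinates). Assume there is a probability measure $\mu$ on $\mathbb{Z}_+$ such that for every $n\in\mathbb{N}$ and all $\xi_1,\dots,\xi_n\in\mathbb{Z}_+$, $$\lim_{L\to\infty}\mathbb{P}(\eta^L_1(0)=\xi_1,\dots,\eta^L_n(0)=\xi_n)=\prod_{k=1}^n\mu(\{\xi_k\}).$$ Then for every $L$ and $t$ the law of $\eta^L(t)$ is finitely exchangeable, and for every $T\in\mathbb{N}$, every $n\in\mathbb{N}$ and all bounded functions $\Phi_1,\dots,\Phi_n:\mathbb{Z}_+^{T+1}\to\mathbb{R}$, $$\lim_{L\to\infty}\mathbb{E}\Big[\prod_{k=1}^n\Phi_k(\eta^L_k(0),\eta^L_k(1),\dots,\eta^L_k(T))\Big]=\prod_{k=1}^n\mathbb{E}\big[\Phi_k(\eta(0),\eta(1),\dots,\eta(T))\big],$$ where $(\eta(t))_{t\in\mathbb{Z}_+}$ is the nonlinear process with initial law $\eta(0)\sim\mu$.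
   Context: Repeated Balls-into-Bins (RBB) process with $L$ bins: a Markov chain $(\eta^L(t))_{t\in\mathbb{Z}_+}$ on $\mathbb{Z}_+^L$. For $\eta\in\mathbb{Z}_+^L$ let $w(\eta):=(\mathbf{1}(\eta_1>0),\dots,\mathbf{1}(\eta_L>0))$ and $K(\eta):=\sum_{j=1}^L\mathbf{1}(\eta_j>0)$. If $\eta^L(t)=\eta$, then $\eta^L(t+1)=\eta-w(\eta)+B(\eta)$, where, conditionally on the past, $B(\eta)$ is multinomial with $K(\eta)$ trials and cell probabilities $(1/L,\dots,1/L)$; i.e. one ball is removed from every nonempty bin and each removed ball is placed independently in a uniformly chosen bin. The nonlinear process $(\eta(t))_{t\in\mathbb{Z}_+}$ takes values in $\mathbb{Z}_+$: $\eta(0)$ has a given distribution; given $\eta(t)$, set $\rho(t):=\mathbb{P}(\eta(t)>0)$, let $N_{t+1}$ be Poisson with mean $\rho(t)$ (mean $0$ meaning identically $0$), independent of everything before, and set $\eta(t+1):=\eta(t)-\mathbf{1}(\eta(t)>0)+N_{t+1}$. *)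

theory Defs
  imports "HOL-Probability.Probability" "HOL-Combinatorics.Permutations"
begin

type_synonym config = "nat \<Rightarrow> nat"   (* bins indexed 0..L-1; value 0 outside *)

definition poi :: "real \<Rightarrow> nat pmf" where
  "poi r = (if 0 < r then poisson_pmf r else return_pmf 0)"

(* throw k balls independently and uniformly into bins 0..L-1 (multinomial increment) *)
fun add_balls :: "nat \<Rightarrow> nat \<Rightarrow> config \<Rightarrow> config pmf" where
  "add_balls L 0 \<eta> = return_pmf \<eta>"
| "add_balls L (Suc k) \<eta> =
     bind_pmf (add_balls L k \<eta>) (\<lambda>\<eta>'. map_pmf (\<lambda>j. \<eta>'(j := \<eta>' j + 1)) (pmf_of_set {..<L}))"

definition occ :: "nat \<Rightarrow> config \<Rightarrow> nat" where
  "occ L \<eta> = card {j. j < L \<and> 0 < \<eta> j}"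

definition rbb_step :: "nat \<Rightarrow> config \<Rightarrow> config pmf" where
  "rbb_step L \<eta> = add_balls L (occ L \<eta>)
      (\<lambda>j. if j < L then \<eta> j - (if 0 < \<eta> j then 1 else 0) else 0)"

fun rbb_law :: "nat \<Rightarrow> config pmf \<Rightarrow> nat \<Rightarrow> config pmf" where
  "rbb_law L init 0 = init"
| "rbb_law L init (Suc t) = bind_pmf (rbb_law L init t) (rbb_step L)"

fun rbb_path :: "nat \<Rightarrow> config pmf \<Rightarrow> nat \<Rightarrow> config list pmf" where
  "rbb_path L init 0 = map_pmf (\<lambda>\<eta>. [\<eta>]) init"
| "rbb_path L init (Suc T) =
     bind_pmf (rbb_path L init T) (\<lambda>xs. map_pmf (\<lambda>\<eta>'. xs @ [\<eta>']) (rbb_step L (last xs)))"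

(* joint law of the path [eta(0), ..., eta(T)] of the nonlinear process;
   rho(T) = P(eta(T) > 0) computed from the law of the last entry *)
fun nl_path :: "nat pmf \<Rightarrow> nat \<Rightarrow> nat list pmf" where
  "nl_path \<mu> 0 = map_pmf (\<lambda>x. [x]) \<mu>"
| "nl_path \<mu> (Suc T) =
     bind_pmf (nl_path \<mu> T) (\<lambda>xs.
       map_pmf (\<lambda>N. xs @ [last xs - (if 0 < last xs then 1 else 0) + N])
         (poi (measure_pmf.prob (nl_path \<mu> T) {ys. 0 < last ys})))"

end

theory Submission
  imports Defs "HOL-Real_Asymp.Real_Asymp"
begin

(* The proof is an induction on the time horizon T for the joint law of the paths of the
   first n bins, pointwise in the path values; convergence of bounded expectations then
   follows by Scheffe's lemma.  Given these n paths up to time T, their values at time T+1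
   are produced by the K = occ balls thrown in the step, whose counts in the first n bins
   are multinomial; when K/L -> r they become independent Poisson(r) counts.  Exchangeability
   makes the occupied fraction K/L concentrate: its second moment around r is expressed by
   P(eta_0 > 0) and P(eta_0 > 0, eta_1 > 0), whose limits r and r^2 are the induction
   hypothesis for n = 1, 2.  Since r = P(eta(T) > 0) is exactly the Poisson parameter of
   the nonlinear process, the limit law factorizes. *)

lemma pmf_integrable_bounded:
  fixes f :: "'a \<Rightarrow> real"
  assumes "\<And>x. \<bar>f x\<bar> \<le> B"
  shows "integrable (measure_pmf p) f"
  using assms by (intro measure_pmf.integrable_const_bound[where B=B]) auto

lemma integrable_indicator_pmf: "integrable (measure_pmf M) (\<lambda>x. indicator A x :: real)"
  by (rule measure_pmf.integrable_const_bound[where B=1]) (auto simp: indicator_def)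

lemma expectation_bind_pmf:
  fixes f :: "'b \<Rightarrow> real"
  assumes "\<And>y. \<bar>f y\<bar> \<le> B"
  shows "measure_pmf.expectation (bind_pmf M N) f
       = measure_pmf.expectation M (\<lambda>x. measure_pmf.expectation (N x) f)"
  unfolding measure_pmf_bind
  by (rule integral_bind[where K="count_space UNIV" and B=B and B'=1])
     (use assms in \<open>auto simp: measure_pmf.emeasure_space_1 measure_pmf_in_subprob_algebra
        intro: measure_pmf.prob_space_axioms prob_space.finite_measure\<close>)

lemma prob_bind_pmf:
  "measure_pmf.prob (bind_pmf M N) E = measure_pmf.expectation M (\<lambda>x. measure_pmf.prob (N x) E)"
  using expectation_bind_pmf[of "indicator E" 1 M N] by (simp add: indicator_def)

lemma abs_expectation_le:
  fixes f g :: "'a \<Rightarrow> real"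
  assumes "\<And>x. \<bar>f x\<bar> \<le> g x" "\<And>x. g x \<le> B"
  shows "\<bar>measure_pmf.expectation M f\<bar> \<le> measure_pmf.expectation M g"
proof -
  have "\<bar>g x\<bar> \<le> B" for x using assms(1)[of x] assms(2)[of x] by linarith
  then have g: "integrable (measure_pmf M) g" by (rule pmf_integrable_bounded)
  have "\<bar>f x\<bar> \<le> B" for x using assms(1)[of x] assms(2)[of x] by linarith
  then have f: "integrable (measure_pmf M) f" by (rule pmf_integrable_bounded)
  have "\<bar>measure_pmf.expectation M f\<bar> \<le> measure_pmf.expectation M (\<lambda>x. \<bar>f x\<bar>)"
    by (rule integral_abs_bound)
  also have "\<dots> \<le> measure_pmf.expectation M g"
    using f g assms(1) by (intro integral_mono) auto
  finally show ?thesis .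
qed

lemma expectation_abs_le_sqrt_square:
  fixes f :: "'a \<Rightarrow> real"
  assumes "\<And>x. \<bar>f x\<bar> \<le> B"
  shows "measure_pmf.expectation M (\<lambda>x. \<bar>f x\<bar>) \<le> sqrt (measure_pmf.expectation M (\<lambda>x. (f x)\<^sup>2))"
proof -
  have "\<bar>\<bar>f x\<bar>\<bar> \<le> B" "\<bar>\<bar>f x\<bar>\<^sup>2\<bar> \<le> B\<^sup>2" for x
    using assms[of x] abs_le_square_iff[of "f x" B] by (auto simp: abs_le_iff)
  then have "integrable (measure_pmf M) (\<lambda>x. \<bar>f x\<bar>)" "integrable (measure_pmf M) (\<lambda>x. \<bar>f x\<bar>\<^sup>2)"
    by (blast intro: pmf_integrable_bounded)+
  then have "(measure_pmf.expectation M (\<lambda>x. \<bar>f x\<bar>))\<^sup>2 \<le> measure_pmf.expectation M (\<lambda>x. (f x)\<^sup>2)"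
    using measure_pmf.variance_positive[of M "\<lambda>x. \<bar>f x\<bar>"] measure_pmf.variance_eq[of M "\<lambda>x. \<bar>f x\<bar>"]
    by simp
  then show ?thesis by (simp add: real_le_rsqrt)
qed

lemma expectation_abs_tendsto_zero_if_square:
  fixes f :: "nat \<Rightarrow> 'a \<Rightarrow> real"
  assumes bounded: "\<And>L x. \<bar>f L x\<bar> \<le> B"
    and square: "(\<lambda>L. measure_pmf.expectation (M L) (\<lambda>x. (f L x)\<^sup>2)) \<longlonglongrightarrow> 0"
  shows "(\<lambda>L. measure_pmf.expectation (M L) (\<lambda>x. \<bar>f L x\<bar>)) \<longlonglongrightarrow> 0"
proof (rule real_tendsto_sandwich[OF _ _ tendsto_const])
  show "(\<lambda>L. sqrt (measure_pmf.expectation (M L) (\<lambda>x. (f L x)\<^sup>2))) \<longlonglongrightarrow> 0"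
    using tendsto_real_sqrt[OF square] by simp
  show "\<forall>\<^sub>F L in sequentially. measure_pmf.expectation (M L) (\<lambda>x. \<bar>f L x\<bar>)
      \<le> sqrt (measure_pmf.expectation (M L) (\<lambda>x. (f L x)\<^sup>2))"
    by (intro always_eventually allI expectation_abs_le_sqrt_square[where B=B] bounded)
qed simp

lemma expectation_minus_finite_sum:
  fixes f :: "'a \<Rightarrow> real"
  assumes bounded: "\<And>x. \<bar>f x\<bar> \<le> B" and "finite F"
  shows "\<bar>measure_pmf.expectation M f - (\<Sum>x\<in>F. f x * pmf M x)\<bar> \<le> B * (1 - (\<Sum>x\<in>F. pmf M x))"
proof -
  have B: "0 \<le> B" using bounded[of undefined] by linarith
  have "\<bar>f x * indicator F x\<bar> \<le> B" "\<bar>f x * indicator (-F) x\<bar> \<le> B" for x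
    using bounded[of x] B by (auto simp: indicator_def)
  then have int: "integrable M (\<lambda>x. f x * indicator F x)" "integrable M (\<lambda>x. f x * indicator (-F) x)"
    by (blast intro: pmf_integrable_bounded)+
  have "measure_pmf.expectation M f
      = measure_pmf.expectation M (\<lambda>x. f x * indicator F x + f x * indicator (-F) x)"
    by (intro Bochner_Integration.integral_cong) (auto simp: indicator_def)
  also have "\<dots> = measure_pmf.expectation M (\<lambda>x. f x * indicator F x)
      + measure_pmf.expectation M (\<lambda>x. f x * indicator (-F) x)"
    using int by simp
  also have "measure_pmf.expectation M (\<lambda>x. f x * indicator F x) = (\<Sum>x\<in>F. f x * pmf M x)"
    using \<open>finite F\<close> by (subst integral_measure_pmf_real[where A=F]) (auto simp: indicator_def)
  finally have split: "measure_pmf.expectation M f - (\<Sum>x\<in>F. f x * pmf M x)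
      = measure_pmf.expectation M (\<lambda>x. f x * indicator (-F) x)" by simp
  have "\<bar>measure_pmf.expectation M (\<lambda>x. f x * indicator (-F) x)\<bar>
      \<le> measure_pmf.expectation M (\<lambda>x. B * indicator (-F) x)"
    using bounded B by (intro abs_expectation_le[where B=B]) (auto simp: indicator_def abs_mult)
  also have "\<dots> = B * (1 - (\<Sum>x\<in>F. pmf M x))"
    using measure_pmf.prob_compl[of F M] \<open>finite F\<close>
    by (simp add: measure_measure_pmf_finite Compl_eq_Diff_UNIV)
  finally show ?thesis unfolding split .
qed

lemma finite_set_pmf_sum_gt:
  fixes M :: "'a::countable pmf"
  assumes "0 < e"
  obtains F where "finite F" "1 - e < (\<Sum>x\<in>F. pmf M x)"
proof -
  define A where "A m = (from_nat ` {..<m} :: 'a set)" for m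
  have "incseq A" unfolding A_def incseq_def by (auto intro: image_mono)
  moreover have "(\<Union>m. A m) = UNIV"
    unfolding A_def by (auto simp: image_iff) (metis from_nat_to_nat lessI lessThan_iff)
  ultimately have "(\<lambda>m. measure_pmf.prob M (A m)) \<longlonglongrightarrow> 1"
    using measure_pmf.finite_Lim_measure_incseq[of A M] by auto
  then have "eventually (\<lambda>m. 1 - e < measure_pmf.prob M (A m)) sequentially"
    using assms by (intro order_tendstoD) auto
  then obtain m where "1 - e < measure_pmf.prob M (A m)"
    by (metis eventually_sequentially order.refl)
  moreover have "finite (A m)" unfolding A_def by simp
  ultimately show ?thesis using that by (metis measure_measure_pmf_finite)
qed

lemma tendsto_expectation_if_tendsto_pmf:
  fixes M :: "nat \<Rightarrow> 'a::countable pmf" and f :: "'a \<Rightarrow> real"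
  assumes pmf: "\<And>x. (\<lambda>L. pmf (M L) x) \<longlonglongrightarrow> pmf N x" and bounded: "\<And>x. \<bar>f x\<bar> \<le> B"
  shows "(\<lambda>L. measure_pmf.expectation (M L) f) \<longlonglongrightarrow> measure_pmf.expectation N f"
proof (rule tendstoI)
  fix e :: real assume e: "0 < e"
  have B: "0 \<le> B" using bounded[of undefined] by linarith
  obtain F where F: "finite F" "1 - e / (4 * B + 4) < (\<Sum>x\<in>F. pmf N x)"
    using finite_set_pmf_sum_gt[of "e / (4 * B + 4)" N] e B by auto
  define R where "R L = \<bar>\<Sum>x\<in>F. f x * pmf (M L) x - f x * pmf N x\<bar>
      + B * (1 - (\<Sum>x\<in>F. pmf (M L) x)) + B * (1 - (\<Sum>x\<in>F. pmf N x))" for L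
  have "R \<longlonglongrightarrow> \<bar>\<Sum>x\<in>F. f x * pmf N x - f x * pmf N x\<bar>
      + B * (1 - (\<Sum>x\<in>F. pmf N x)) + B * (1 - (\<Sum>x\<in>F. pmf N x))"
    unfolding R_def by (intro tendsto_intros pmf)
  moreover have "2 * B * (1 - (\<Sum>x\<in>F. pmf N x)) < e"
  proof -
    have "2 * B * (1 - (\<Sum>x\<in>F. pmf N x)) \<le> 2 * B * (e / (4 * B + 4))"
      using F B by (intro mult_left_mono) auto
    also have "\<dots> < e" using e B by (auto simp: field_simps intro!: add_pos_nonneg)
    finally show ?thesis .
  qed
  ultimately have "eventually (\<lambda>L. R L < e) sequentially"
    by (intro order_tendstoD) (auto simp: algebra_simps)
  moreover have dist: "dist (measure_pmf.expectation (M L) f) (measure_pmf.expectation N f) \<le> R L" for L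
    using expectation_minus_finite_sum[where f=f, OF bounded F(1), of "M L"]
      expectation_minus_finite_sum[where f=f, OF bounded F(1), of N]
    unfolding R_def dist_real_def sum_subtractf by linarith
  ultimately show "eventually (\<lambda>L. dist (measure_pmf.expectation (M L) f) (measure_pmf.expectation N f) < e)
      sequentially"
    by (elim eventually_mono) (use dist in \<open>auto intro: le_less_trans\<close>)
qed

fun iid_pmf :: "nat \<Rightarrow> 'a pmf \<Rightarrow> 'a list pmf" where
  "iid_pmf 0 M = return_pmf []"
| "iid_pmf (Suc n) M = bind_pmf (iid_pmf n M) (\<lambda>xs. map_pmf (\<lambda>x. xs @ [x]) M)"

lemma pmf_bind_snoc:
  "pmf (bind_pmf M (\<lambda>xs. map_pmf (\<lambda>y. xs @ [h xs y]) (N xs))) w =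
     (if w = [] then 0
      else pmf M (butlast w) * measure_pmf.prob (N (butlast w)) {y. h (butlast w) y = last w})"
proof -
  have "measure_pmf.prob (N xs) {y. xs @ [h xs y] = w} = indicator {butlast w} xs *
      measure_pmf.prob (N (butlast w)) {y. h (butlast w) y = last w}" if "w \<noteq> []" for xs
  proof (cases "xs = butlast w")
    case True
    then have "{y. xs @ [h xs y] = w} = {y. h (butlast w) y = last w}"
      using that by (auto simp: snoc_eq_iff_butlast)
    then show ?thesis using True by simp
  next
    case False
    then have "{y. xs @ [h xs y] = w} = {}" by (auto simp: snoc_eq_iff_butlast)
    then show ?thesis using False by simp
  qed
  then show ?thesis
    by (cases "w = []") (simp_all add: pmf_bind pmf_map vimage_def measure_pmf_single)
qed

lemma length_iid_pmf: "xs \<in> set_pmf (iid_pmf n M) \<Longrightarrow> length xs = n"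
  by (induction n arbitrary: xs) auto

lemma pmf_iid_pmf: "pmf (iid_pmf n M) xs = (if length xs = n then (\<Prod>k<n. pmf M (xs ! k)) else 0)"
proof (induction n arbitrary: xs)
  case (Suc n)
  show ?case
  proof (cases "xs = []")
    case False
    have "pmf (iid_pmf (Suc n) M) xs = pmf (iid_pmf n M) (butlast xs) * pmf M (last xs)"
      using False pmf_bind_snoc[of "iid_pmf n M" "\<lambda>_ y. y" "\<lambda>_. M" xs]
      by (simp add: measure_pmf_single)
    moreover have "last xs = xs ! n" if "length xs = Suc n"
      using that False by (simp add: last_conv_nth)
    ultimately show ?thesis
      using Suc.IH[of "butlast xs"] False by (auto simp: nth_butlast)
  qed (simp add: pmf_bind_snoc[where h="\<lambda>_ y. y", simplified])
qed (simp add: indicator_def)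

lemma abs_prod_le:
  fixes f :: "nat \<Rightarrow> 'a \<Rightarrow> real"
  assumes "\<And>k x. k < n \<Longrightarrow> \<bar>f k x\<bar> \<le> B k"
  shows "\<bar>\<Prod>k<n. f k (x k)\<bar> \<le> (\<Prod>k<n. B k)"
  unfolding abs_prod by (rule prod_mono) (use assms in auto)

lemma expectation_iid_pmf_prod:
  fixes f :: "nat \<Rightarrow> 'a \<Rightarrow> real"
  assumes "\<And>k x. k < n \<Longrightarrow> \<bar>f k x\<bar> \<le> B k"
  shows "measure_pmf.expectation (iid_pmf n M) (\<lambda>xs. \<Prod>k<n. f k (xs ! k))
       = (\<Prod>k<n. measure_pmf.expectation M (f k))"
  using assms
proof (induction n)
  case (Suc n)
  have bounded: "\<bar>\<Prod>k<Suc n. f k (xs ! k)\<bar> \<le> (\<Prod>k<Suc n. B k)" for xs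
    by (rule abs_prod_le[where x="\<lambda>k. xs ! k"]) (use Suc.prems in auto)
  have snoc: "(\<Prod>k<Suc n. f k ((xs @ [x]) ! k)) = (\<Prod>k<n. f k (xs ! k)) * f n x"
    if "length xs = n" for xs x
  proof -
    have "(\<Prod>k<n. f k ((xs @ [x]) ! k)) = (\<Prod>k<n. f k (xs ! k))"
      using that by (intro prod.cong) (auto simp: nth_append)
    then show ?thesis using that by (simp add: nth_append)
  qed
  have "measure_pmf.expectation (iid_pmf (Suc n) M) (\<lambda>xs. \<Prod>k<Suc n. f k (xs ! k))
     = measure_pmf.expectation (iid_pmf n M)
         (\<lambda>xs. measure_pmf.expectation M (\<lambda>x. \<Prod>k<Suc n. f k ((xs @ [x]) ! k)))"
    by (simp only: iid_pmf.simps expectation_bind_pmf[OF bounded] integral_map_pmf)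
  also have "\<dots> = measure_pmf.expectation (iid_pmf n M)
         (\<lambda>xs. (\<Prod>k<n. f k (xs ! k)) * measure_pmf.expectation M (f n))"
  proof (intro integral_cong_AE AE_pmfI)
    fix xs assume "xs \<in> set_pmf (iid_pmf n M)"
    then show "measure_pmf.expectation M (\<lambda>x. \<Prod>k<Suc n. f k ((xs @ [x]) ! k))
        = (\<Prod>k<n. f k (xs ! k)) * measure_pmf.expectation M (f n)"
      by (simp only: snoc length_iid_pmf integral_mult_right_zero)
  qed simp_all
  finally show ?case using Suc by simp
qed simp

section \<open>Exchangeability of the RBB process\<close>

definition exchangeable :: "nat \<Rightarrow> (nat \<Rightarrow> 'a) pmf \<Rightarrow> bool" where
  "exchangeable L M \<longleftrightarrow> (\<forall>\<pi>. \<pi> permutes {..<L} \<longrightarrow> map_pmf (\<lambda>\<eta>. \<eta> \<circ> \<pi>) M = M)"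

lemma map_pmf_of_set_permutes:
  assumes "\<pi> permutes A" "finite A" "A \<noteq> {}"
  shows "map_pmf \<pi> (pmf_of_set A) = pmf_of_set A"
  using assms map_pmf_of_set_inj[of \<pi> A] permutes_inj_on[OF assms(1)] permutes_image[OF assms(1)]
  by simp

lemma add_balls_permute:
  assumes \<pi>: "\<pi> permutes {..<L}"
  shows "map_pmf (\<lambda>\<eta>. \<eta> \<circ> \<pi>) (add_balls L K \<zeta>) = add_balls L K (\<zeta> \<circ> \<pi>)"
proof (induction K)
  case (Suc K)
  show ?case
  proof (cases "L = 0")
    case True
    then have "\<pi> = id" using \<pi> by (auto simp: permutes_def fun_eq_iff)
    then show ?thesis by (simp add: o_def)
  next
    case False
    have "(\<lambda>j. \<eta>(j := \<eta> j + 1) \<circ> \<pi>) = (\<lambda>j. (\<eta> \<circ> \<pi>)(j := (\<eta> \<circ> \<pi>) j + 1)) \<circ> inv \<pi>" for \<eta> :: config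
    proof (intro ext)
      fix j i
      have "\<pi> i = j \<longleftrightarrow> i = inv \<pi> j" using permutes_inv_eq[OF \<pi>] by metis
      then show "(\<eta>(j := \<eta> j + 1) \<circ> \<pi>) i = ((\<lambda>j. (\<eta> \<circ> \<pi>)(j := (\<eta> \<circ> \<pi>) j + 1)) \<circ> inv \<pi>) j i"
        using permutes_inverses(1)[OF \<pi>] by auto
    qed
    then have "map_pmf (\<lambda>j. \<eta>(j := \<eta> j + 1) \<circ> \<pi>) (pmf_of_set {..<L})
        = map_pmf (\<lambda>j. (\<eta> \<circ> \<pi>)(j := (\<eta> \<circ> \<pi>) j + 1)) (map_pmf (inv \<pi>) (pmf_of_set {..<L}))"
      for \<eta> :: config
      by (simp add: pmf.map_comp)
    then have throw: "map_pmf (\<lambda>j. \<eta>(j := \<eta> j + 1) \<circ> \<pi>) (pmf_of_set {..<L})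
        = map_pmf (\<lambda>j. (\<eta> \<circ> \<pi>)(j := (\<eta> \<circ> \<pi>) j + 1)) (pmf_of_set {..<L})" for \<eta> :: config
      using map_pmf_of_set_permutes[OF permutes_inv[OF \<pi>]] False by (simp add: lessThan_empty_iff)
    have "map_pmf (\<lambda>\<eta>. \<eta> \<circ> \<pi>) (add_balls L (Suc K) \<zeta>)
        = bind_pmf (add_balls L K \<zeta>) (\<lambda>\<eta>. map_pmf (\<lambda>j. \<eta>(j := \<eta> j + 1) \<circ> \<pi>) (pmf_of_set {..<L}))"
      by (simp add: map_bind_pmf pmf.map_comp o_def)
    also have "\<dots> = bind_pmf (add_balls L K \<zeta>)
        (\<lambda>\<eta>. map_pmf (\<lambda>j. (\<eta> \<circ> \<pi>)(j := (\<eta> \<circ> \<pi>) j + 1)) (pmf_of_set {..<L}))"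
      unfolding throw ..
    also have "\<dots> = bind_pmf (map_pmf (\<lambda>\<eta>. \<eta> \<circ> \<pi>) (add_balls L K \<zeta>))
        (\<lambda>\<eta>. map_pmf (\<lambda>j. \<eta>(j := \<eta> j + 1)) (pmf_of_set {..<L}))"
      by (simp add: bind_map_pmf)
    also have "\<dots> = add_balls L (Suc K) (\<zeta> \<circ> \<pi>)"
      unfolding Suc.IH by simp
    finally show ?thesis .
  qed
qed simp

lemma occ_eq_sum: "occ L \<eta> = (\<Sum>j<L. if 0 < \<eta> j then 1 else 0)"
proof -
  have "{j. j < L \<and> 0 < \<eta> j} = {..<L} \<inter> {j. 0 < \<eta> j}" by auto
  then show ?thesis unfolding occ_def by (simp add: sum.If_cases)
qed

lemma occ_permute: "\<pi> permutes {..<L} \<Longrightarrow> occ L (\<eta> \<circ> \<pi>) = occ L \<eta>"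
  unfolding occ_eq_sum by (subst sum.permute[of \<pi>]) (simp_all add: o_def)

lemma rbb_step_permute:
  assumes \<pi>: "\<pi> permutes {..<L}"
  shows "map_pmf (\<lambda>\<eta>. \<eta> \<circ> \<pi>) (rbb_step L \<eta>) = rbb_step L (\<eta> \<circ> \<pi>)"
proof -
  have "j < L \<longleftrightarrow> \<pi> j < L" for j
    using \<pi> by (metis lessThan_iff permutes_in_image)
  moreover have "\<not> j < L \<Longrightarrow> \<pi> j = j" for j
    using \<pi> by (simp add: permutes_def)
  ultimately have "(\<lambda>j. if j < L then (\<eta> \<circ> \<pi>) j - (if 0 < (\<eta> \<circ> \<pi>) j then 1 else 0) else 0)
      = (\<lambda>j. if j < L then \<eta> j - (if 0 < \<eta> j then 1 else 0) else 0) \<circ> \<pi>"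
    by (auto simp: fun_eq_iff)
  then show ?thesis unfolding rbb_step_def by (simp add: occ_permute[OF \<pi>] add_balls_permute[OF \<pi>])
qed

lemma exchangeable_rbb_law:
  assumes "exchangeable L init"
  shows "exchangeable L (rbb_law L init t)"
  unfolding exchangeable_def
proof (intro allI impI)
  fix \<pi> assume \<pi>: "\<pi> permutes {..<L}"
  show "map_pmf (\<lambda>\<eta>. \<eta> \<circ> \<pi>) (rbb_law L init t) = rbb_law L init t"
  proof (induction t)
    case (Suc t)
    have "map_pmf (\<lambda>\<eta>. \<eta> \<circ> \<pi>) (rbb_law L init (Suc t))
        = bind_pmf (map_pmf (\<lambda>\<eta>. \<eta> \<circ> \<pi>) (rbb_law L init t)) (rbb_step L)"
      by (simp add: map_bind_pmf rbb_step_permute[OF \<pi>] bind_map_pmf)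
    also have "\<dots> = rbb_law L init (Suc t)"
      unfolding Suc.IH by simp
    finally show ?case .
  qed (use assms \<pi> in \<open>simp only: exchangeable_def rbb_law.simps\<close>)
qed

section \<open>Marginals of the multinomial increment\<close>

definition ffact :: "real \<Rightarrow> nat \<Rightarrow> real" where
  "ffact x s = (\<Prod>i<s. x - real i)"

lemma ffact_0 [simp]: "ffact x 0 = 1"
  by (simp add: ffact_def)

lemma ffact_Suc: "ffact x (Suc s) = ffact x s * (x - real s)"
  by (simp add: ffact_def)

lemma ffact_of_nat_eq_0: "K < s \<Longrightarrow> ffact (real K) s = 0"
  unfolding ffact_def by (rule prod_zero) auto

lemma ffact_plus_1: "ffact (x + 1) s = ffact x s + real s * ffact x (s - 1)"
proof (induction s)
  case (Suc s)
  show ?case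
  proof (cases s)
    case (Suc s')
    have "ffact (x + 1) (Suc s)
        = (ffact x (s - 1) * (x - real (s - 1)) + real s * ffact x (s - 1)) * (x + 1 - real s)"
      using Suc.IH Suc by (simp add: ffact_Suc)
    also have "\<dots> = ffact x (s - 1) * (x - real (s - 1)) * (x - real s)
        + real (Suc s) * (ffact x (s - 1) * (x - real (s - 1)))"
      using Suc by (simp add: algebra_simps)
    finally show ?thesis using Suc by (simp add: ffact_Suc)
  qed (simp add: ffact_Suc)
qed simp

definition balls_marginal :: "nat \<Rightarrow> nat \<Rightarrow> nat \<Rightarrow> (nat \<Rightarrow> nat) \<Rightarrow> real" where
  "balls_marginal L n K c = ffact (real K) (\<Sum>k<n. c k) / (\<Prod>k<n. fact (c k))
      * (1 / real L) ^ (\<Sum>k<n. c k) * (1 - real n / real L) ^ (K - (\<Sum>k<n. c k))"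

lemma sum_fun_upd_decr:
  fixes c :: "nat \<Rightarrow> nat"
  assumes "j < n" "0 < c j"
  shows "(\<Sum>k<n. (c(j := c j - 1)) k) = (\<Sum>k<n. c k) - 1"
  using assms sum.remove[of "{..<n}" j c] sum.remove[of "{..<n}" j "c(j := c j - 1)"] by simp

lemma prod_fact_fun_upd_decr:
  fixes c :: "nat \<Rightarrow> nat"
  assumes "j < n" "0 < c j"
  shows "real (c j) * (\<Prod>k<n. fact ((c(j := c j - 1)) k)) = (\<Prod>k<n. fact (c k) :: real)"
proof -
  have "(fact (c j) :: real) = real (c j) * fact (c j - 1)"
    using assms by (metis fact_reduce of_nat_fact of_nat_mult)
  then show ?thesis
    using assms prod.remove[of "{..<n}" j "\<lambda>k. fact (c k) :: real"]
      prod.remove[of "{..<n}" j "\<lambda>k. fact ((c(j := c j - 1)) k) :: real"] by simp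
qed

text \<open>One more ball either misses the first \<open>n\<close> bins (probability \<open>1 - n/L\<close>) or lands
  in bin \<open>j < n\<close>, which must then have received \<open>c j - 1\<close> balls before.\<close>

lemma balls_marginal_Suc:
  assumes "0 < L"
  shows "balls_marginal L n (Suc K) c = (1 - real n / real L) * balls_marginal L n K c
     + 1 / real L * (\<Sum>j<n. if 0 < c j then balls_marginal L n K (c(j := c j - 1)) else 0)"
proof -
  define s where "s = (\<Sum>k<n. c k)"
  define C where "C = (\<Prod>k<n. fact (c k) :: real)"
  define r where "r = 1 / real L"
  define u where "u = 1 - real n / real L"
  define M where "M = ffact (real K) (s - 1) / C * r ^ (s - 1) * u ^ (K + 1 - s)"
  have C: "C > 0" unfolding C_def by (intro prod_pos) auto
  have hit_term: "(if 0 < c j then balls_marginal L n K (c(j := c j - 1)) else 0) = real (c j) * M"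
    if "j < n" for j
  proof (cases "0 < c j")
    case True
    have "1 \<le> (\<Sum>k<n. c k)" using True that
      by (metis One_nat_def Suc_leI finite_lessThan le_trans lessThan_iff member_le_sum zero_le)
    then have "K - ((\<Sum>k<n. c k) - 1) = K + 1 - (\<Sum>k<n. c k)" by simp
    moreover have "(\<Prod>k<n. fact ((c(j := c j - 1)) k) :: real) > 0" by (intro prod_pos) auto
    ultimately show ?thesis
      using True unfolding balls_marginal_def M_def C_def s_def r_def u_def
        prod_fact_fun_upd_decr[of j n c, OF that True, symmetric] sum_fun_upd_decr[of j n c, OF that True]
      by (simp add: field_simps)
  qed simp
  have hits: "(\<Sum>j<n. if 0 < c j then balls_marginal L n K (c(j := c j - 1)) else 0) = real s * M"
    by (simp add: hit_term s_def sum_distrib_right)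
  have miss: "ffact (real K) s * u ^ (Suc K - s) = u * (ffact (real K) s * u ^ (K - s))"
    by (cases "s \<le> K") (simp_all add: Suc_diff_le ffact_of_nat_eq_0)
  have hit: "r ^ s * (real s * ffact (real K) (s - 1) * u ^ (Suc K - s)) / C = r * (real s * M)"
    unfolding M_def by (cases s) (simp_all add: field_simps)
  have "balls_marginal L n (Suc K) c = ffact (real K + 1) s / C * r ^ s * u ^ (Suc K - s)"
    unfolding balls_marginal_def s_def C_def r_def u_def by (simp add: add.commute)
  also have "\<dots> = r ^ s * (ffact (real K) s * u ^ (Suc K - s)) / C
      + r ^ s * (real s * ffact (real K) (s - 1) * u ^ (Suc K - s)) / C"
    unfolding ffact_plus_1 by (simp add: algebra_simps add_divide_distrib)
  also have "\<dots> = u * balls_marginal L n K c + r * (real s * M)"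
    unfolding miss hit unfolding balls_marginal_def s_def C_def r_def u_def by simp
  finally show ?thesis unfolding hits u_def r_def .
qed

lemma add_balls_ge: "0 < L \<Longrightarrow> \<eta> \<in> set_pmf (add_balls L K \<zeta>) \<Longrightarrow> \<zeta> j \<le> \<eta> j"
proof (induction K arbitrary: \<eta>)
  case (Suc K)
  then obtain \<eta>' i where "\<eta>' \<in> set_pmf (add_balls L K \<zeta>)" "\<eta> = \<eta>'(i := \<eta>' i + 1)"
    by auto
  then show ?case using Suc.IH[of \<eta>'] Suc.prems by auto
qed simp

definition incr_event :: "nat \<Rightarrow> config \<Rightarrow> (nat \<Rightarrow> nat) \<Rightarrow> config set" where
  "incr_event n \<zeta> c = {\<eta>. \<forall>k<n. \<eta> k = \<zeta> k + c k}"

lemma prob_throw_ball: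
  assumes L: "0 < L" "n \<le> L" and ge: "\<And>k. \<zeta> k \<le> \<eta> k"
  shows "measure_pmf.prob (map_pmf (\<lambda>j. \<eta>(j := \<eta> j + 1)) (pmf_of_set {..<L})) (incr_event n \<zeta> c)
     = (1 - real n / real L) * indicator (incr_event n \<zeta> c) \<eta>
       + 1 / real L * (\<Sum>j<n. if 0 < c j then indicator (incr_event n \<zeta> (c(j := c j - 1))) \<eta> else 0)"
proof -
  define hit where "hit j \<longleftrightarrow> \<eta>(j := \<eta> j + 1) \<in> incr_event n \<zeta> c" for j
  have hit_low: "of_bool (hit j)
      = (if 0 < c j then indicator (incr_event n \<zeta> (c(j := c j - 1))) \<eta> else 0 :: real)"
    if "j < n" for j
  proof -
    have "hit j \<longleftrightarrow> 0 < c j \<and> \<eta> \<in> incr_event n \<zeta> (c(j := c j - 1))"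
    proof
      assume "hit j"
      then have all: "\<forall>k<n. (\<eta>(j := \<eta> j + 1)) k = \<zeta> k + c k"
        unfolding hit_def incr_event_def by simp
      then have "\<eta> j + 1 = \<zeta> j + c j" using that by (metis fun_upd_same)
      then have "0 < c j" using ge[of j] by linarith
      moreover have "\<eta> k = \<zeta> k + (c(j := c j - 1)) k" if "k < n" for k
        using all that \<open>\<eta> j + 1 = \<zeta> j + c j\<close> \<open>0 < c j\<close> by (cases "k = j") auto
      ultimately show "0 < c j \<and> \<eta> \<in> incr_event n \<zeta> (c(j := c j - 1))"
        unfolding incr_event_def by simp
    qed (use that in \<open>auto simp: hit_def incr_event_def\<close>)
    then show ?thesis by (auto simp: indicator_def)
  qed
  have hit_high: "hit j \<longleftrightarrow> \<eta> \<in> incr_event n \<zeta> c" if "n \<le> j" for j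
    using that by (auto simp: hit_def incr_event_def)
  have "(\<Sum>j<L. of_bool (hit j) :: real)
      = (\<Sum>j<n. of_bool (hit j)) + real (L - n) * indicator (incr_event n \<zeta> c) \<eta>"
  proof -
    have split: "{..<L} = {..<n} \<union> {n..<L}" using L by auto
    have "(\<Sum>j<L. of_bool (hit j) :: real) = (\<Sum>j<n. of_bool (hit j)) + (\<Sum>j\<in>{n..<L}. of_bool (hit j))"
      unfolding split by (rule sum.union_disjoint) auto
    then show ?thesis by (simp add: hit_high indicator_def)
  qed
  moreover have "measure_pmf.prob (map_pmf (\<lambda>j. \<eta>(j := \<eta> j + 1)) (pmf_of_set {..<L})) (incr_event n \<zeta> c)
      = (\<Sum>j<L. of_bool (hit j)) / real L"
    using L measure_pmf_of_set[of "{..<L}" "{j. hit j}"] by (auto simp: hit_def vimage_def Int_def)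
  moreover have "(\<Sum>j<n. of_bool (hit j))
      = (\<Sum>j<n. if 0 < c j then indicator (incr_event n \<zeta> (c(j := c j - 1))) \<eta> else 0 :: real)"
    by (intro sum.cong refl) (simp add: hit_low)
  moreover have "(A + real (L - n) * I) / real L = (1 - real n / real L) * I + 1 / real L * A" for A I :: real
    using L by (simp add: field_simps of_nat_diff)
  ultimately show ?thesis by metis
qed

lemma prob_add_balls_marginal:
  assumes L: "0 < L" "n \<le> L"
  shows "measure_pmf.prob (add_balls L K \<zeta>) (incr_event n \<zeta> c) = balls_marginal L n K c"
proof (induction K arbitrary: c)
  case 0
  show ?case
  proof (cases "\<forall>k<n. c k = 0")
    case False
    then have "0 < (\<Sum>k<n. c k)" by (metis finite_lessThan lessThan_iff sum_eq_0_iff neq0_conv)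
    then show ?thesis using False
      using ffact_of_nat_eq_0[of 0] by (auto simp: balls_marginal_def incr_event_def indicator_def)
  qed (simp add: balls_marginal_def incr_event_def)
next
  case (Suc K)
  let ?A = "add_balls L K \<zeta>" and ?E = "incr_event n \<zeta>"
  have "measure_pmf.prob (add_balls L (Suc K) \<zeta>) (?E c)
      = measure_pmf.expectation ?A (\<lambda>\<eta>. (1 - real n / real L) * indicator (?E c) \<eta>
          + 1 / real L * (\<Sum>j<n. if 0 < c j then indicator (?E (c(j := c j - 1))) \<eta> else 0))"
    unfolding add_balls.simps prob_bind_pmf
    by (intro integral_cong_AE AE_pmfI prob_throw_ball[OF L]) (auto dest: add_balls_ge[OF L(1)])
  also have "\<dots> = (1 - real n / real L) * measure_pmf.prob ?A (?E c)
      + 1 / real L * (\<Sum>j<n. if 0 < c j then measure_pmf.prob ?A (?E (c(j := c j - 1))) else 0)"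
  proof -
    have "measure_pmf.expectation ?A (\<lambda>\<eta>. if P then indicator X \<eta> else 0)
        = (if P then measure_pmf.prob ?A X else 0)" for P X
      by (cases P) auto
    then show ?thesis
      by (simp add: measure_pmf.integrable_const_bound[where B=1] Bochner_Integration.integral_sum)
  qed
  also have "\<dots> = (1 - real n / real L) * balls_marginal L n K c
      + 1 / real L * (\<Sum>j<n. if 0 < c j then balls_marginal L n K (c(j := c j - 1)) else 0)"
    by (simp only: Suc.IH)
  finally show ?case by (simp only: balls_marginal_Suc[OF L(1)])
qed

section \<open>Poisson approximation\<close>

lemma abs_prod_diff_le_sum:
  fixes a b :: "nat \<Rightarrow> real"
  assumes "\<And>i. i < s \<Longrightarrow> \<bar>a i\<bar> \<le> 1" "\<And>i. i < s \<Longrightarrow> \<bar>b i\<bar> \<le> 1"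
  shows "\<bar>(\<Prod>i<s. a i) - (\<Prod>i<s. b i)\<bar> \<le> (\<Sum>i<s. \<bar>a i - b i\<bar>)"
  using assms
proof (induction s)
  case (Suc s)
  have IH: "\<bar>(\<Prod>i<s. a i) - (\<Prod>i<s. b i)\<bar> \<le> (\<Sum>i<s. \<bar>a i - b i\<bar>)"
    using Suc.prems by (intro Suc.IH) auto
  have "\<bar>\<Prod>i<s. b i\<bar> \<le> 1"
    using Suc.prems by (auto simp: abs_prod intro!: prod_le_1)
  have "(\<Prod>i<Suc s. a i) - (\<Prod>i<Suc s. b i)
      = ((\<Prod>i<s. a i) - (\<Prod>i<s. b i)) * a s + (\<Prod>i<s. b i) * (a s - b s)"
    by (simp add: algebra_simps)
  then have "\<bar>(\<Prod>i<Suc s. a i) - (\<Prod>i<Suc s. b i)\<bar>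
      \<le> \<bar>(\<Prod>i<s. a i) - (\<Prod>i<s. b i)\<bar> * \<bar>a s\<bar> + \<bar>\<Prod>i<s. b i\<bar> * \<bar>a s - b s\<bar>"
    by (metis abs_mult abs_triangle_ineq)
  also have "\<dots> \<le> \<bar>(\<Prod>i<s. a i) - (\<Prod>i<s. b i)\<bar> * 1 + 1 * \<bar>a s - b s\<bar>"
    using Suc.prems(1)[of s] \<open>\<bar>\<Prod>i<s. b i\<bar> \<le> 1\<close> by (intro add_mono mult_left_mono mult_right_mono) auto
  finally have "\<bar>(\<Prod>i<Suc s. a i) - (\<Prod>i<Suc s. b i)\<bar>
      \<le> \<bar>(\<Prod>i<s. a i) - (\<Prod>i<s. b i)\<bar> + \<bar>a s - b s\<bar>" by simp
  then show ?case using IH by simp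
qed simp

lemma abs_power_diff_le:
  fixes x y :: real
  assumes "0 \<le> x" "x \<le> 1" "0 \<le> y" "y \<le> 1"
  shows "\<bar>x ^ K - y ^ K\<bar> \<le> real K * \<bar>x - y\<bar>"
  using abs_prod_diff_le_sum[of K "\<lambda>_. x" "\<lambda>_. y"] assms by simp

lemma abs_mult_diff_le:
  fixes A B a b :: real
  assumes "0 \<le> a" "a \<le> 1" "0 \<le> B" "B \<le> 1"
  shows "\<bar>A * B - a * b\<bar> \<le> \<bar>A - a\<bar> + \<bar>B - b\<bar>"
proof -
  have "A * B - a * b = (A - a) * B + a * (B - b)"
    by (simp add: algebra_simps)
  then have "\<bar>A * B - a * b\<bar> \<le> \<bar>A - a\<bar> * B + a * \<bar>B - b\<bar>"
    using assms by (metis abs_mult abs_of_nonneg abs_triangle_ineq)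
  also have "\<dots> \<le> \<bar>A - a\<bar> + \<bar>B - b\<bar>"
    using assms by (intro add_mono mult_left_le mult_left_le_one_le) auto
  finally show ?thesis .
qed

lemma exp_minus_le_quadratic:
  fixes y :: real
  assumes "0 \<le> y"
  shows "exp (- y) \<le> 1 - y + y\<^sup>2"
proof -
  have "exp (- y) * (1 + y) \<le> exp (- y) * exp y"
    by (intro mult_left_mono exp_ge_add_one_self) auto
  also have "\<dots> \<le> (1 - y + y\<^sup>2) * (1 + y)"
    using assms by (simp add: exp_minus algebra_simps power2_eq_square)
  finally show ?thesis using assms by (simp add: mult_le_cancel_right_pos)
qed

lemma abs_exp_diff_le_nonpos:
  fixes a b :: real
  assumes "a \<le> 0" "b \<le> 0"
  shows "\<bar>exp a - exp b\<bar> \<le> \<bar>a - b\<bar>"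
proof -
  have "exp q - exp p \<le> q - p" if "p \<le> q" "q \<le> 0" for p q :: real
  proof -
    have "exp q - exp p = exp q * (1 - exp (p - q))" by (simp add: algebra_simps exp_diff)
    also have "\<dots> \<le> 1 * (q - p)"
    proof (rule mult_mono)
      show "1 - exp (p - q) \<le> q - p" using exp_ge_add_one_self[of "p - q"] by linarith
    qed (use that in auto)
    finally show ?thesis by simp
  qed
  from this[of a b] this[of b a] assms show ?thesis by (cases "a \<le> b") auto
qed

definition poisson_marginal :: "nat \<Rightarrow> (nat \<Rightarrow> nat) \<Rightarrow> real \<Rightarrow> real" where
  "poisson_marginal n c x = x ^ (\<Sum>k<n. c k) * exp (- (real n * x)) / (\<Prod>k<n. fact (c k))"

lemma pmf_poi: "0 \<le> r \<Longrightarrow> pmf (poi r) m = r ^ m / fact m * exp (- r)"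
  by (cases "r = 0") (auto simp: poi_def indicator_def)

lemma prod_pmf_poi:
  assumes "0 \<le> r"
  shows "(\<Prod>k<n. pmf (poi r) (c k)) = poisson_marginal n c r"
proof -
  have "(\<Prod>k<n. pmf (poi r) (c k)) = (\<Prod>k<n. r ^ c k) / (\<Prod>k<n. fact (c k)) * exp (- r) ^ n"
    using assms by (simp add: pmf_poi prod.distrib prod_dividef)
  then show ?thesis
    unfolding poisson_marginal_def by (simp add: power_sum exp_of_nat_mult[symmetric])
qed

lemma poisson_marginal_lipschitz:
  assumes "0 \<le> x" "x \<le> 1" "0 \<le> y" "y \<le> 1"
  shows "\<bar>poisson_marginal n c x - poisson_marginal n c y\<bar> \<le> real ((\<Sum>k<n. c k) + n) * \<bar>x - y\<bar>"
proof -
  define s where "s = (\<Sum>k<n. c k)"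
  define C where "C = (\<Prod>k<n. fact (c k) :: real)"
  have C: "1 \<le> C" unfolding C_def by (intro prod_ge_1) auto
  have exp: "\<bar>exp (- (real n * x)) - exp (- (real n * y))\<bar> \<le> real n * \<bar>x - y\<bar>"
  proof -
    have "\<bar>real n * x - real n * y\<bar> = real n * \<bar>x - y\<bar>"
      by (simp add: abs_mult flip: right_diff_distrib)
    then show ?thesis
      using abs_exp_diff_le_nonpos[of "- (real n * x)" "- (real n * y)"] assms by simp
  qed
  have "x ^ s * exp (- (real n * x)) - y ^ s * exp (- (real n * y))
     = (x ^ s - y ^ s) * exp (- (real n * x)) + y ^ s * (exp (- (real n * x)) - exp (- (real n * y)))"
    by (simp add: algebra_simps)
  then have "\<bar>x ^ s * exp (- (real n * x)) - y ^ s * exp (- (real n * y))\<bar>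
     \<le> \<bar>(x ^ s - y ^ s) * exp (- (real n * x))\<bar> + \<bar>y ^ s * (exp (- (real n * x)) - exp (- (real n * y)))\<bar>"
    by (simp only: abs_triangle_ineq)
  also have "\<dots> = \<bar>x ^ s - y ^ s\<bar> * exp (- (real n * x)) + y ^ s * \<bar>exp (- (real n * x)) - exp (- (real n * y))\<bar>"
    using assms by (simp add: abs_mult)
  also have "\<dots> \<le> (real s * \<bar>x - y\<bar>) * 1 + 1 * (real n * \<bar>x - y\<bar>)"
    using assms exp abs_power_diff_le[of x y s]
    by (intro add_mono mult_mono) (auto simp: power_le_one)
  finally have "\<bar>x ^ s * exp (- (real n * x)) - y ^ s * exp (- (real n * y))\<bar> \<le> real (s + n) * \<bar>x - y\<bar>"
    by (simp add: algebra_simps)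
  moreover have "\<bar>poisson_marginal n c x - poisson_marginal n c y\<bar>
      = \<bar>x ^ s * exp (- (real n * x)) - y ^ s * exp (- (real n * y))\<bar> / C"
    unfolding poisson_marginal_def s_def[symmetric] C_def[symmetric] using C
    by (simp add: diff_divide_distrib[symmetric])
  moreover have "\<bar>x ^ s * exp (- (real n * x)) - y ^ s * exp (- (real n * y))\<bar> / C
      \<le> \<bar>x ^ s * exp (- (real n * x)) - y ^ s * exp (- (real n * y))\<bar>"
    using C divide_left_mono[of 1 C] by simp
  ultimately show ?thesis unfolding s_def by linarith
qed

lemma ffact_div_power_approx:
  assumes "K \<le> L" "s \<le> L" "0 < L"
  shows "\<bar>ffact (real K) s / real L ^ s - (real K / real L) ^ s\<bar> \<le> real (s * s) / real L"
proof -
  have "\<bar>ffact (real K) s / real L ^ s - (real K / real L) ^ s\<bar>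
      = \<bar>(\<Prod>i<s. (real K - real i) / real L) - (\<Prod>i<s. real K / real L)\<bar>"
    unfolding ffact_def by (simp add: prod_dividef)
  also have "\<dots> \<le> (\<Sum>i<s. \<bar>(real K - real i) / real L - real K / real L\<bar>)"
    using assms by (intro abs_prod_diff_le_sum) (auto simp: abs_le_iff field_simps)
  also have "\<dots> = (\<Sum>i<s. real i / real L)"
    using assms by (intro sum.cong) (auto simp: field_simps)
  also have "\<dots> \<le> (\<Sum>i<s. real s / real L)"
    by (intro sum_mono divide_right_mono) auto
  finally show ?thesis by simp
qed

lemma power_approx_exp:
  assumes "s \<le> K" "K \<le> L" "n < L"
  defines "u \<equiv> 1 - real n / real L"
  shows "\<bar>u ^ (K - s) - exp (- (real n * (real K / real L)))\<bar> \<le> (1 / u ^ s - 1) + real (n * n) / real L"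
proof -
  have u: "0 < u" "u \<le> 1" unfolding u_def using assms by auto
  have "\<bar>u ^ K / u ^ s - u ^ K\<bar> = u ^ K * (1 / u ^ s - 1)"
    using u power_le_one[of u K] power_le_one[of u s] by (simp add: field_simps abs_if)
  also have "\<dots> \<le> 1 / u ^ s - 1"
    using u by (intro mult_left_le_one_le) (auto simp: power_le_one field_simps)
  finally have shift: "\<bar>u ^ K / u ^ s - u ^ K\<bar> \<le> 1 / u ^ s - 1" .
  have "\<bar>u ^ K - exp (- (real n / real L)) ^ K\<bar> \<le> real K * \<bar>u - exp (- (real n / real L))\<bar>"
    using u by (intro abs_power_diff_le) auto
  also have "\<dots> \<le> real L * (real n / real L)\<^sup>2"
    using exp_minus_le_quadratic[of "real n / real L"] exp_ge_add_one_self[of "- (real n / real L)"] assms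
    by (intro mult_mono) (auto simp: u_def)
  also have "\<dots> = real (n * n) / real L"
    using assms by (simp add: power2_eq_square)
  finally have "\<bar>u ^ K - exp (- (real n / real L)) ^ K\<bar> \<le> real (n * n) / real L" .
  moreover have "u ^ (K - s) = u ^ K / u ^ s"
    using assms u by (simp add: power_diff)
  moreover have "exp (- (real n * (real K / real L))) = exp (- (real n / real L)) ^ K"
    by (simp add: exp_of_nat_mult[symmetric] field_simps)
  ultimately show ?thesis using shift by linarith
qed

definition poisson_error :: "nat \<Rightarrow> nat \<Rightarrow> nat \<Rightarrow> real" where
  "poisson_error L n s = real (s * s) / real L + (1 / (1 - real n / real L) ^ s - 1) + real (n * n) / real L"

lemma poisson_error_tendsto_0: "(\<lambda>L. poisson_error L n s) \<longlonglongrightarrow> 0"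
  unfolding poisson_error_def by real_asymp

lemma balls_marginal_approx:
  assumes L: "n + (\<Sum>k<n. c k) < L" and K: "K \<le> L"
  shows "\<bar>balls_marginal L n K c - poisson_marginal n c (real K / real L)\<bar>
     \<le> poisson_error L n (\<Sum>k<n. c k)"
proof -
  define s where "s = (\<Sum>k<n. c k)"
  define C where "C = (\<Prod>k<n. fact (c k) :: real)"
  define u where "u = 1 - real n / real L"
  define A where "A = ffact (real K) s / real L ^ s"
  define B where "B = u ^ (K - s)"
  define a where "a = (real K / real L) ^ s"
  define b where "b = exp (- (real n * (real K / real L)))"
  have C: "1 \<le> C" unfolding C_def by (intro prod_ge_1) auto
  have u: "0 < u" "u \<le> 1" unfolding u_def using L by auto
  have a: "0 \<le> a" "a \<le> 1" unfolding a_def using K L by (auto intro!: power_le_one)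
  have b: "0 \<le> b" "b \<le> 1" unfolding b_def by auto
  have B: "0 \<le> B" "B \<le> 1" unfolding B_def using u by (auto simp: power_le_one)
  have Aa: "\<bar>A - a\<bar> \<le> real (s * s) / real L"
    unfolding A_def a_def using L K s_def by (intro ffact_div_power_approx) auto
  have u_error: "0 \<le> 1 / u ^ s - 1"
    using u by (simp add: power_le_one field_simps)
  have "\<bar>A * B - a * b\<bar> \<le> poisson_error L n s"
  proof (cases "K < s")
    case True
    then have "A = 0" unfolding A_def by (simp add: ffact_of_nat_eq_0)
    then have "\<bar>A * B - a * b\<bar> \<le> \<bar>A - a\<bar>"
      using a b by (simp add: mult_left_le)
    moreover have "0 \<le> real (n * n) / real L" by simp
    ultimately show ?thesis
      using Aa u_error unfolding poisson_error_def u_def by linarith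
  next
    case False
    have "\<bar>B - b\<bar> \<le> (1 / u ^ s - 1) + real (n * n) / real L"
      unfolding B_def b_def u_def using False K L by (intro power_approx_exp) auto
    then show ?thesis
      using abs_mult_diff_le[OF a B, of A b] Aa unfolding poisson_error_def u_def by linarith
  qed
  moreover have "balls_marginal L n K c = A * B / C"
    unfolding balls_marginal_def A_def B_def C_def s_def u_def by (simp add: power_one_over)
  moreover have "poisson_marginal n c (real K / real L) = a * b / C"
    unfolding poisson_marginal_def a_def b_def C_def s_def by simp
  moreover have "\<bar>A * B / C - a * b / C\<bar> \<le> \<bar>A * B - a * b\<bar>"
    using C divide_left_mono[of 1 C] by (simp add: diff_divide_distrib[symmetric])
  ultimately show ?thesis unfolding s_def by linarith
qed

lemma abs_poisson_marginal_le_1: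
  assumes "0 \<le> x" "x \<le> 1"
  shows "\<bar>poisson_marginal n c x\<bar> \<le> 1"
proof -
  have "1 \<le> (\<Prod>k<n. fact (c k) :: real)" by (intro prod_ge_1) auto
  moreover have "x ^ (\<Sum>k<n. c k) * exp (- (real n * x)) \<le> 1 * 1"
    using assms by (intro mult_mono power_le_one) auto
  ultimately show ?thesis
    using assms by (simp add: poisson_marginal_def divide_le_eq_1)
qed

lemma tendsto_expectation_poisson_marginal:
  fixes M :: "nat \<Rightarrow> 'a pmf" and N :: "nat \<Rightarrow> 'a \<Rightarrow> nat"
  assumes A: "(\<lambda>L. measure_pmf.prob (M L) A) \<longlonglongrightarrow> a"
    and N: "\<And>L x. N L x \<le> L"
    and density: "(\<lambda>L. measure_pmf.expectation (M L) (\<lambda>x. \<bar>real (N L x) / real L - r\<bar>)) \<longlonglongrightarrow> 0"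
    and r: "0 \<le> r" "r \<le> 1"
  shows "(\<lambda>L. measure_pmf.expectation (M L) (\<lambda>x. indicator A x * poisson_marginal n c (real (N L x) / real L)))
           \<longlonglongrightarrow> a * poisson_marginal n c r"
proof -
  define g where "g = poisson_marginal n c r"
  define D where "D L x = indicator A x * (poisson_marginal n c (real (N L x) / real L) - g)" for L x
  have N01: "0 \<le> real (N L x) / real L" "real (N L x) / real L \<le> 1" for L x
    using N[of L x] by (auto simp: divide_le_eq_1)
  define K where "K = real ((\<Sum>k<n. c k) + n)"
  have K: "0 \<le> K" unfolding K_def by (rule of_nat_0_le_iff)
  then have D: "\<bar>D L x\<bar> \<le> K * \<bar>real (N L x) / real L - r\<bar>" for L x
    using poisson_marginal_lipschitz[OF N01[of L x] r, of n c, folded K_def]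
    unfolding D_def g_def by (simp add: indicator_def abs_mult)
  have "\<bar>real (N L x) / real L - r\<bar> \<le> 2" for L x
    using N01[of L x] r by linarith
  then have D_bounded: "K * \<bar>real (N L x) / real L - r\<bar> \<le> K * 2" for L x
    using K by (intro mult_left_mono)
  have "norm (measure_pmf.expectation (M L) (D L))
      \<le> K * measure_pmf.expectation (M L) (\<lambda>x. \<bar>real (N L x) / real L - r\<bar>)" for L
    using abs_expectation_le[of "D L" "\<lambda>x. K * \<bar>real (N L x) / real L - r\<bar>", OF D D_bounded] by simp
  then have "(\<lambda>L. measure_pmf.expectation (M L) (D L)) \<longlonglongrightarrow> 0"
    by (intro Lim_null_comparison[OF always_eventually tendsto_mult_right_zero[OF density]] allI) simp
  then have "(\<lambda>L. measure_pmf.expectation (M L) (D L) + g * measure_pmf.prob (M L) A) \<longlonglongrightarrow> 0 + g * a"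
    by (intro tendsto_intros A)
  moreover have "measure_pmf.expectation (M L) (\<lambda>x. indicator A x * poisson_marginal n c (real (N L x) / real L))
      = measure_pmf.expectation (M L) (D L) + g * measure_pmf.prob (M L) A" for L
  proof -
    have "\<bar>D L x\<bar> \<le> K * 2" for x using D[of L x] D_bounded[of L x] by linarith
    then have "integrable (M L) (D L)" by (rule pmf_integrable_bounded)
    moreover have "(\<lambda>x. indicator A x * poisson_marginal n c (real (N L x) / real L)) = (\<lambda>x. D L x + g * indicator A x)"
      unfolding D_def by (auto simp: fun_eq_iff algebra_simps)
    ultimately show ?thesis by (simp add: integrable_indicator_pmf)
  qed
  ultimately show ?thesis unfolding g_def by (simp add: mult.commute)
qed

lemma tendsto_expectation_balls_marginal:
  fixes M :: "nat \<Rightarrow> 'a pmf" and N :: "nat \<Rightarrow> 'a \<Rightarrow> nat"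
  assumes A: "(\<lambda>L. measure_pmf.prob (M L) A) \<longlonglongrightarrow> a"
    and N: "\<And>L x. N L x \<le> L"
    and density: "(\<lambda>L. measure_pmf.expectation (M L) (\<lambda>x. \<bar>real (N L x) / real L - r\<bar>)) \<longlonglongrightarrow> 0"
    and r: "0 \<le> r" "r \<le> 1"
  shows "(\<lambda>L. measure_pmf.expectation (M L) (\<lambda>x. indicator A x * balls_marginal L n (N L x) c))
           \<longlonglongrightarrow> a * poisson_marginal n c r"
proof -
  define s where "s = (\<Sum>k<n. c k)"
  define P where "P L x = indicator A x * poisson_marginal n c (real (N L x) / real L)" for L x
  define D where "D L x = indicator A x * balls_marginal L n (N L x) c - P L x" for L x
  have D: "\<bar>D L x\<bar> \<le> poisson_error L n s" if "n + s < L" for L x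
    using balls_marginal_approx[of n c L "N L x"] that N[of L x]
    unfolding D_def P_def s_def by (auto simp: indicator_def)
  have P: "\<bar>P L x\<bar> \<le> 1" for L x
    using abs_poisson_marginal_le_1[of "real (N L x) / real L" n c] N[of L x]
    unfolding P_def by (auto simp: indicator_def divide_le_eq_1)
  have "norm (measure_pmf.expectation (M L) (D L)) \<le> poisson_error L n s" if "n + s < L" for L
    using abs_expectation_le[of "D L" "\<lambda>_. poisson_error L n s" "poisson_error L n s" "M L"] D[OF that]
    by simp
  then have "eventually (\<lambda>L. norm (measure_pmf.expectation (M L) (D L)) \<le> poisson_error L n s) sequentially"
    unfolding eventually_sequentially by (intro exI[of _ "Suc (n + s)"]) auto
  then have "(\<lambda>L. measure_pmf.expectation (M L) (D L)) \<longlonglongrightarrow> 0"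
    by (rule Lim_null_comparison) (rule poisson_error_tendsto_0)
  from tendsto_add[OF this tendsto_expectation_poisson_marginal[OF A N density r, of n c]]
  have "(\<lambda>L. measure_pmf.expectation (M L) (D L) + measure_pmf.expectation (M L) (P L))
      \<longlonglongrightarrow> a * poisson_marginal n c r"
    unfolding P_def by simp
  moreover have "eventually (\<lambda>L. measure_pmf.expectation (M L) (D L) + measure_pmf.expectation (M L) (P L)
      = measure_pmf.expectation (M L) (\<lambda>x. indicator A x * balls_marginal L n (N L x) c)) sequentially"
  proof (rule eventually_mono[OF eventually_gt_at_top[of "n + s"]])
    fix L assume "n + s < L"
    then have "integrable (M L) (D L)" "integrable (M L) (P L)"
      using D P by (blast intro: pmf_integrable_bounded)+
    then have "measure_pmf.expectation (M L) (D L) + measure_pmf.expectation (M L) (P L)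
        = measure_pmf.expectation (M L) (\<lambda>x. D L x + P L x)"
      by simp
    also have "(\<lambda>x. D L x + P L x) = (\<lambda>x. indicator A x * balls_marginal L n (N L x) c)"
      by (simp add: D_def)
    finally show "measure_pmf.expectation (M L) (D L) + measure_pmf.expectation (M L) (P L)
      = measure_pmf.expectation (M L) (\<lambda>x. indicator A x * balls_marginal L n (N L x) c)" .
  qed
  ultimately show ?thesis by (rule Lim_transform_eventually)
qed

section \<open>Concentration of the occupied fraction\<close>

lemma prob_exchangeable_permute:
  assumes "exchangeable L M" "\<pi> permutes {..<L}"
  shows "measure_pmf.prob M {\<eta>. P (\<eta> \<circ> \<pi>)} = measure_pmf.prob M {\<eta>. P \<eta>}"
proof -
  have "measure_pmf.prob M {\<eta>. P \<eta>} = measure_pmf.prob (map_pmf (\<lambda>\<eta>. \<eta> \<circ> \<pi>) M) {\<eta>. P \<eta>}"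
    using assms unfolding exchangeable_def by simp
  then show ?thesis by (simp add: vimage_def)
qed

lemma prob_pos_exchangeable:
  assumes "exchangeable L M" "j < L"
  shows "measure_pmf.prob M {\<eta>. 0 < \<eta> j} = measure_pmf.prob M {\<eta>. 0 < \<eta> 0}"
proof -
  have "Transposition.transpose 0 j permutes {..<L}"
    using assms(2) by (intro permutes_swap_id) auto
  from prob_exchangeable_permute[OF assms(1) this, where P="\<lambda>\<eta>. 0 < \<eta> 0"]
  show ?thesis by simp
qed

lemma prob_pos_pair_exchangeable:
  assumes "exchangeable L M" "i < L" "j < L" "i \<noteq> j"
  shows "measure_pmf.prob M {\<eta>. 0 < \<eta> i \<and> 0 < \<eta> j} = measure_pmf.prob M {\<eta>. 0 < \<eta> 0 \<and> 0 < \<eta> 1}"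
proof -
  define t where "t = Transposition.transpose 0 i j"
  define \<pi> where "\<pi> = Transposition.transpose 0 i \<circ> Transposition.transpose 1 t"
  have "t < L" "t \<noteq> 0" unfolding t_def using assms by (auto simp: Transposition.transpose_def)
  then have "\<pi> permutes {..<L}" unfolding \<pi>_def
    using assms by (intro permutes_compose permutes_swap_id) auto
  moreover have "\<pi> 0 = i"
    unfolding \<pi>_def using \<open>t \<noteq> 0\<close> by (simp add: Transposition.transpose_def)
  moreover have "\<pi> 1 = j"
    unfolding \<pi>_def t_def by simp
  ultimately show ?thesis
    using prob_exchangeable_permute[OF assms(1), of \<pi> "\<lambda>\<eta>. 0 < \<eta> 0 \<and> 0 < \<eta> 1"] by simp
qed

lemma occ_le: "occ L \<eta> \<le> L"
  using card_mono[of "{..<L}" "{j. j < L \<and> 0 < \<eta> j}"] unfolding occ_def by auto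

lemma real_occ_eq_sum: "real (occ L \<eta>) = (\<Sum>j<L. indicator {\<eta>. 0 < \<eta> j} \<eta>)"
proof -
  have "{j. j < L \<and> 0 < \<eta> j} = {..<L} \<inter> {j. 0 < \<eta> j}" by auto
  then show ?thesis unfolding occ_def by (simp add: indicator_def of_bool_def[symmetric])
qed

lemma expectation_occ:
  assumes "exchangeable L M"
  shows "measure_pmf.expectation M (\<lambda>\<eta>. real (occ L \<eta>)) = real L * measure_pmf.prob M {\<eta>. 0 < \<eta> 0}"
proof -
  have "measure_pmf.expectation M (\<lambda>\<eta>. real (occ L \<eta>)) = (\<Sum>j<L. measure_pmf.prob M {\<eta>. 0 < \<eta> j})"
    unfolding real_occ_eq_sum
    by (subst Bochner_Integration.integral_sum) (auto intro!: integrable_indicator_pmf)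
  also have "\<dots> = (\<Sum>j<L. measure_pmf.prob M {\<eta>. 0 < \<eta> 0})"
    using assms by (intro sum.cong refl prob_pos_exchangeable) auto
  finally show ?thesis by simp
qed

lemma expectation_occ_square:
  assumes M: "exchangeable L M"
  shows "measure_pmf.expectation M (\<lambda>\<eta>. (real (occ L \<eta>))\<^sup>2)
    = real L * measure_pmf.prob M {\<eta>. 0 < \<eta> 0}
      + real L * (real L - 1) * measure_pmf.prob M {\<eta>. 0 < \<eta> 0 \<and> 0 < \<eta> 1}"
proof -
  define p1 where "p1 = measure_pmf.prob M {\<eta>. 0 < \<eta> 0}"
  define p2 where "p2 = measure_pmf.prob M {\<eta>. 0 < \<eta> 0 \<and> 0 < \<eta> 1}"
  define S where "S j = {\<eta> :: config. 0 < \<eta> j}" for j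
  have pair: "(\<Sum>j<L. measure_pmf.prob M (S i \<inter> S j)) = p1 + (real L - 1) * p2" if "i < L" for i
  proof -
    have "(\<Sum>j<L. measure_pmf.prob M (S i \<inter> S j))
        = measure_pmf.prob M (S i) + (\<Sum>j\<in>{..<L}-{i}. measure_pmf.prob M (S i \<inter> S j))"
      using that by (simp add: sum.remove)
    also have "(\<Sum>j\<in>{..<L}-{i}. measure_pmf.prob M (S i \<inter> S j)) = (\<Sum>j\<in>{..<L}-{i}. p2)"
      unfolding S_def p2_def using M that
      by (intro sum.cong refl) (use prob_pos_pair_exchangeable[OF M that] in \<open>auto simp: Int_def\<close>)
    also have "measure_pmf.prob M (S i) = p1"
      unfolding S_def p1_def by (rule prob_pos_exchangeable[OF M that])
    finally show ?thesis
      using that by (simp add: of_nat_diff)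
  qed
  have "(real (occ L \<eta>))\<^sup>2 = (\<Sum>i<L. \<Sum>j<L. indicator (S i \<inter> S j) \<eta>)" for \<eta>
    unfolding real_occ_eq_sum power2_eq_square sum_product S_def by (simp add: indicator_inter_arith)
  then have "measure_pmf.expectation M (\<lambda>\<eta>. (real (occ L \<eta>))\<^sup>2)
      = (\<Sum>i<L. \<Sum>j<L. measure_pmf.prob M (S i \<inter> S j))"
    by (simp add: Bochner_Integration.integral_sum Bochner_Integration.integrable_sum
        integrable_indicator_pmf)
  also have "\<dots> = (\<Sum>i<L. p1 + (real L - 1) * p2)"
    by (intro sum.cong refl pair) auto
  finally show ?thesis unfolding p1_def p2_def by (simp add: algebra_simps)
qed

lemma expectation_occ_square_dev:
  assumes M: "exchangeable L M" and L: "0 < L"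
  shows "measure_pmf.expectation M (\<lambda>\<eta>. (real (occ L \<eta>) / real L - r)\<^sup>2)
    = (measure_pmf.prob M {\<eta>. 0 < \<eta> 0} + (real L - 1) * measure_pmf.prob M {\<eta>. 0 < \<eta> 0 \<and> 0 < \<eta> 1}) / real L
      - 2 * r * measure_pmf.prob M {\<eta>. 0 < \<eta> 0} + r\<^sup>2"
proof -
  have "\<bar>real (occ L \<eta>)\<bar> \<le> real L" "\<bar>(real (occ L \<eta>))\<^sup>2\<bar> \<le> (real L)\<^sup>2" for \<eta>
    using occ_le[of L \<eta>] by (auto simp: power_mono)
  then have "integrable (measure_pmf M) (\<lambda>\<eta>. real (occ L \<eta>))"
      "integrable (measure_pmf M) (\<lambda>\<eta>. (real (occ L \<eta>))\<^sup>2)"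
    by (blast intro: pmf_integrable_bounded)+
  moreover have "(real (occ L \<eta>) / real L - r)\<^sup>2
     = 1 / (real L)\<^sup>2 * (real (occ L \<eta>))\<^sup>2 + (- 2 * r / real L) * real (occ L \<eta>) + r\<^sup>2" for \<eta>
    using L by (simp add: power2_eq_square field_simps)
  ultimately have "measure_pmf.expectation M (\<lambda>\<eta>. (real (occ L \<eta>) / real L - r)\<^sup>2)
     = 1 / (real L)\<^sup>2 * measure_pmf.expectation M (\<lambda>\<eta>. (real (occ L \<eta>))\<^sup>2)
       + (- 2 * r / real L) * measure_pmf.expectation M (\<lambda>\<eta>. real (occ L \<eta>)) + r\<^sup>2"
    by simp
  then show ?thesis
    unfolding expectation_occ[OF M] expectation_occ_square[OF M]
    using L by (simp add: field_simps power2_eq_square)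
qed

lemma tendsto_occ_density:
  fixes M :: "nat \<Rightarrow> config pmf" and r :: real
  assumes M: "\<And>L. exchangeable L (M L)"
    and first: "(\<lambda>L. measure_pmf.prob (M L) {\<eta>. 0 < \<eta> 0}) \<longlonglongrightarrow> r"
    and second: "(\<lambda>L. measure_pmf.prob (M L) {\<eta>. 0 < \<eta> 0 \<and> 0 < \<eta> 1}) \<longlonglongrightarrow> r\<^sup>2"
  shows "(\<lambda>L. measure_pmf.expectation (M L) (\<lambda>\<eta>. \<bar>real (occ L \<eta>) / real L - r\<bar>)) \<longlonglongrightarrow> 0"
proof (rule expectation_abs_tendsto_zero_if_square)
  show "\<bar>real (occ L \<eta>) / real L - r\<bar> \<le> 1 + \<bar>r\<bar>" for L \<eta>
  proof -
    have "0 \<le> real (occ L \<eta>) / real L" "real (occ L \<eta>) / real L \<le> 1"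
      using occ_le[of L \<eta>] by (auto simp: divide_le_eq_1)
    then show ?thesis by linarith
  qed
  define P1 where "P1 L = measure_pmf.prob (M L) {\<eta>. 0 < \<eta> 0}" for L
  define P2 where "P2 L = measure_pmf.prob (M L) {\<eta>. 0 < \<eta> 0 \<and> 0 < \<eta> 1}" for L
  have "(\<lambda>L. P1 L * (1 / real L) + P2 L * (1 - 1 / real L) - 2 * r * P1 L + r\<^sup>2)
      \<longlonglongrightarrow> r * 0 + r\<^sup>2 * (1 - 0) - 2 * r * r + r\<^sup>2"
    unfolding P1_def P2_def by (intro tendsto_intros first second lim_1_over_n)
  then have "(\<lambda>L. P1 L * (1 / real L) + P2 L * (1 - 1 / real L) - 2 * r * P1 L + r\<^sup>2) \<longlonglongrightarrow> 0"
    by (simp add: power2_eq_square)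
  moreover have "eventually (\<lambda>L. P1 L * (1 / real L) + P2 L * (1 - 1 / real L) - 2 * r * P1 L + r\<^sup>2
      = measure_pmf.expectation (M L) (\<lambda>\<eta>. (real (occ L \<eta>) / real L - r)\<^sup>2)) sequentially"
    unfolding eventually_sequentially P1_def P2_def
    by (intro exI[of _ 2] allI impI, subst expectation_occ_square_dev[OF M]) (auto simp: field_simps)
  ultimately show "(\<lambda>L. measure_pmf.expectation (M L) (\<lambda>\<eta>. (real (occ L \<eta>) / real L - r)\<^sup>2)) \<longlonglongrightarrow> 0"
    by (rule Lim_transform_eventually)
qed

section \<open>Paths of finitely many bins\<close>

lemma length_rbb_path: "p \<in> set_pmf (rbb_path L init T) \<Longrightarrow> length p = Suc T"
  by (induction T arbitrary: p) auto

lemma length_nl_path: "p \<in> set_pmf (nl_path \<mu> T) \<Longrightarrow> length p = Suc T"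
  by (induction T arbitrary: p) auto

lemma map_pmf_last_rbb_path: "map_pmf last (rbb_path L init T) = rbb_law L init T"
proof (induction T)
  case (Suc T)
  have "map_pmf last (rbb_path L init (Suc T)) = bind_pmf (map_pmf last (rbb_path L init T)) (rbb_step L)"
    by (simp add: map_bind_pmf pmf.map_comp o_def bind_map_pmf)
  then show ?case using Suc by simp
qed (simp add: pmf.map_comp o_def)

lemma expectation_rbb_law:
  fixes f :: "config \<Rightarrow> real"
  shows "measure_pmf.expectation (rbb_law L init T) f
       = measure_pmf.expectation (rbb_path L init T) (\<lambda>p. f (last p))"
  by (simp add: integral_map_pmf flip: map_pmf_last_rbb_path)

definition bin_paths :: "nat \<Rightarrow> config list \<Rightarrow> nat list list" where
  "bin_paths n p = map (\<lambda>k. map (\<lambda>\<eta>. \<eta> k) p) [0..<n]"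

definition serve :: "nat \<Rightarrow> nat" where
  "serve x = x - (if 0 < x then 1 else 0)"

text \<open>\<open>admissible n z\<close> says that the bin paths \<open>z\<close> extend their prefixes \<open>map butlast z\<close>
  by one step in which no bin loses more than its served ball; \<open>arrivals z k\<close> is then the
  number of balls that bin \<open>k\<close> received in that step.\<close>

definition admissible :: "nat \<Rightarrow> nat list list \<Rightarrow> bool" where
  "admissible n z \<longleftrightarrow> length z = n \<and> (\<forall>k<n. z ! k \<noteq> [] \<and> serve (last (butlast (z ! k))) \<le> last (z ! k))"

definition arrivals :: "nat list list \<Rightarrow> nat \<Rightarrow> nat" where
  "arrivals z k = last (z ! k) - serve (last (butlast (z ! k)))"

lemma nth_bin_paths: "k < n \<Longrightarrow> bin_paths n p ! k = map (\<lambda>\<eta>. \<eta> k) p"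
  unfolding bin_paths_def by simp

lemma bin_paths_eq_iff: "bin_paths n p = z \<longleftrightarrow> length z = n \<and> (\<forall>k<n. map (\<lambda>\<eta>. \<eta> k) p = z ! k)"
  unfolding bin_paths_def by (auto simp: list_eq_iff_nth_eq)

lemma bin_paths_snoc_eq_iff:
  "bin_paths n (p @ [\<eta>]) = z \<longleftrightarrow>
     length z = n \<and> (\<forall>k<n. z ! k \<noteq> [] \<and> butlast (z ! k) = map (\<lambda>\<eta>. \<eta> k) p \<and> last (z ! k) = \<eta> k)"
  unfolding bin_paths_eq_iff by (auto simp: snoc_eq_iff_butlast)

lemma prob_rbb_step_bin_paths:
  assumes L: "0 < L" "n \<le> L" and p: "p \<noteq> []"
  shows "measure_pmf.prob (rbb_step L (last p)) {\<eta>. bin_paths n (p @ [\<eta>]) = z}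
     = (if admissible n z
        then indicator {p. bin_paths n p = map butlast z} p * balls_marginal L n (occ L (last p)) (arrivals z)
        else 0)"
proof (cases "length z = n \<and> (\<forall>k<n. z ! k \<noteq> [] \<and> butlast (z ! k) = map (\<lambda>\<eta>. \<eta> k) p)")
  case False
  then have "{\<eta>. bin_paths n (p @ [\<eta>]) = z} = {}"
    by (auto simp: bin_paths_snoc_eq_iff)
  moreover have "admissible n z \<Longrightarrow> bin_paths n p \<noteq> map butlast z"
    using False by (auto simp: admissible_def bin_paths_eq_iff)
  ultimately show ?thesis by auto
next
  case True
  define \<zeta> where "\<zeta> = (\<lambda>j. if j < L then last p j - (if 0 < last p j then 1 else 0) else 0)"
  have \<zeta>: "\<zeta> k = serve (last (butlast (z ! k)))" if "k < n" for k
    using True that L p unfolding \<zeta>_def serve_def by (auto simp: last_map)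
  have event: "{\<eta>. bin_paths n (p @ [\<eta>]) = z} = {\<eta>. \<forall>k<n. \<eta> k = last (z ! k)}"
    using True by (auto simp: bin_paths_snoc_eq_iff)
  have prefix: "bin_paths n p = map butlast z"
    using True by (simp add: bin_paths_eq_iff)
  have step: "rbb_step L (last p) = add_balls L (occ L (last p)) \<zeta>"
    unfolding rbb_step_def \<zeta>_def ..
  show ?thesis
  proof (cases "admissible n z")
    case True
    then have "{\<eta>. \<forall>k<n. \<eta> k = last (z ! k)} = incr_event n \<zeta> (arrivals z)"
      unfolding admissible_def arrivals_def incr_event_def using \<zeta> by auto
    then show ?thesis
      using True prefix prob_add_balls_marginal[OF L, of "occ L (last p)" \<zeta> "arrivals z"]
      unfolding event step by simp
  next
    case False
    then obtain k where k: "k < n" "last (z ! k) < \<zeta> k"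
      using \<open>length z = n \<and> _\<close> \<zeta> unfolding admissible_def by force
    then have "set_pmf (add_balls L (occ L (last p)) \<zeta>) \<inter> {\<eta>. \<forall>k<n. \<eta> k = last (z ! k)} = {}"
      using add_balls_ge[OF L(1), of _ "occ L (last p)" \<zeta> k] by force
    then show ?thesis
      using False unfolding event step by (simp add: measure_pmf_zero_iff)
  qed
qed

lemma pmf_bin_paths_rbb_path_Suc:
  assumes "0 < L" "n \<le> L"
  shows "pmf (map_pmf (bin_paths n) (rbb_path L init (Suc T))) z
    = (if admissible n z
       then measure_pmf.expectation (rbb_path L init T)
          (\<lambda>p. indicator {p. bin_paths n p = map butlast z} p * balls_marginal L n (occ L (last p)) (arrivals z))
       else 0)"
proof -
  have "pmf (map_pmf (bin_paths n) (rbb_path L init (Suc T))) z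
      = measure_pmf.expectation (rbb_path L init T)
          (\<lambda>p. measure_pmf.prob (rbb_step L (last p)) {\<eta>. bin_paths n (p @ [\<eta>]) = z})"
    by (simp add: map_bind_pmf pmf.map_comp o_def pmf_bind pmf_map vimage_def)
  also have "\<dots> = measure_pmf.expectation (rbb_path L init T)
      (\<lambda>p. if admissible n z
           then indicator {p. bin_paths n p = map butlast z} p * balls_marginal L n (occ L (last p)) (arrivals z)
           else 0)"
    by (intro integral_cong_AE AE_pmfI prob_rbb_step_bin_paths assms)
       (auto dest: length_rbb_path)
  finally show ?thesis by simp
qed

lemma prob_poi_plus:
  "measure_pmf.prob (poi r) {N. b + N = y} = (if b \<le> y then pmf (poi r) (y - b) else 0)"
proof (cases "b \<le> y")
  case True
  then have "{N. b + N = y} = {y - b}" by auto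
  then show ?thesis using True by (simp add: measure_pmf_single)
qed simp

lemma pmf_nl_path_Suc:
  "pmf (nl_path \<mu> (Suc T)) w =
     (if w = [] then 0
      else pmf (nl_path \<mu> T) (butlast w) *
        (if serve (last (butlast w)) \<le> last w
         then pmf (poi (measure_pmf.prob (nl_path \<mu> T) {ys. 0 < last ys})) (last w - serve (last (butlast w)))
         else 0))"
proof -
  have "nl_path \<mu> (Suc T) = bind_pmf (nl_path \<mu> T) (\<lambda>xs. map_pmf (\<lambda>N. xs @ [serve (last xs) + N])
       (poi (measure_pmf.prob (nl_path \<mu> T) {ys. 0 < last ys})))"
    by (simp only: nl_path.simps serve_def)
  then show ?thesis by (simp only: pmf_bind_snoc prob_poi_plus)
qed

lemma pmf_iid_nl_path_Suc:
  "pmf (iid_pmf n (nl_path \<mu> (Suc T))) z =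
     (if admissible n z
      then pmf (iid_pmf n (nl_path \<mu> T)) (map butlast z)
           * poisson_marginal n (arrivals z) (measure_pmf.prob (nl_path \<mu> T) {ys. 0 < last ys})
      else 0)"
proof -
  define r where "r = measure_pmf.prob (nl_path \<mu> T) {ys. 0 < last ys}"
  show ?thesis
  proof (cases "admissible n z")
    case True
    then have "pmf (iid_pmf n (nl_path \<mu> (Suc T))) z
        = (\<Prod>k<n. pmf (nl_path \<mu> T) (map butlast z ! k) * pmf (poi r) (arrivals z k))"
      unfolding pmf_iid_pmf r_def arrivals_def admissible_def
      by (auto simp del: nl_path.simps simp: pmf_nl_path_Suc intro!: prod.cong)
    also have "\<dots> = pmf (iid_pmf n (nl_path \<mu> T)) (map butlast z) * poisson_marginal n (arrivals z) r"
      using True by (simp add: prod.distrib pmf_iid_pmf prod_pmf_poi r_def admissible_def)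
    finally show ?thesis using True unfolding r_def by simp
  next
    case False
    then have "length z \<noteq> n \<or> (\<exists>k<n. pmf (nl_path \<mu> (Suc T)) (z ! k) = 0)"
      unfolding admissible_def by (auto simp del: nl_path.simps simp: pmf_nl_path_Suc)
    then show ?thesis
      using False by (auto simp: pmf_iid_pmf intro: prod_zero)
  qed
qed

section \<open>Propagation of chaos\<close>

lemma tendsto_pmf_bin_paths_0:
  assumes conv: "\<And>n (\<xi> :: nat \<Rightarrow> nat).
       (\<lambda>L. measure_pmf.prob (init L) {\<eta>. \<forall>k<n. \<eta> k = \<xi> k}) \<longlonglongrightarrow> (\<Prod>k<n. pmf \<mu> (\<xi> k))"
  shows "(\<lambda>L. pmf (map_pmf (bin_paths n) (rbb_path L (init L) 0)) z) \<longlonglongrightarrow> pmf (iid_pmf n (nl_path \<mu> 0)) z"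
proof -
  have pmf_init: "pmf (map_pmf (bin_paths n) (rbb_path L (init L) 0)) z
      = measure_pmf.prob (init L) {\<eta>. bin_paths n [\<eta>] = z}" for L
    by (simp add: pmf_map pmf.map_comp o_def vimage_def)
  have singleton_iff: "bin_paths n [\<eta>] = z \<longleftrightarrow> length z = n \<and> (\<forall>k<n. z ! k = [\<eta> k])" for \<eta>
    unfolding bin_paths_eq_iff by auto
  show ?thesis
  proof (cases "length z = n \<and> (\<forall>k<n. z ! k = [hd (z ! k)])")
    case True
    then have "{\<eta>. bin_paths n [\<eta>] = z} = {\<eta>. \<forall>k<n. \<eta> k = hd (z ! k)}"
      unfolding singleton_iff by (metis list.sel(1))
    moreover have "pmf (iid_pmf n (nl_path \<mu> 0)) z = (\<Prod>k<n. pmf \<mu> (hd (z ! k)))"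
      using True pmf_map_inj'[of "\<lambda>x. [x]" \<mu>] by (auto simp: pmf_iid_pmf inj_def intro!: prod.cong) metis
    ultimately show ?thesis unfolding pmf_init using conv[of n "\<lambda>k. hd (z ! k)"] by simp
  next
    case False
    then have "{\<eta>. bin_paths n [\<eta>] = z} = {}"
      unfolding singleton_iff by auto
    moreover have "pmf (iid_pmf n (nl_path \<mu> 0)) z = 0"
    proof (cases "length z = n")
      case True
      with False obtain k where "k < n" "z ! k \<noteq> [hd (z ! k)]" by auto
      then have "pmf (nl_path \<mu> 0) (z ! k) = 0"
        by (auto intro!: pmf_map_outside)
      then show ?thesis using True \<open>k < n\<close> by (auto simp: pmf_iid_pmf intro: prod_zero)
    qed (simp add: pmf_iid_pmf)
    ultimately show ?thesis unfolding pmf_init by simp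
  qed
qed

lemma tendsto_expectation_bin_paths_prod:
  fixes g :: "nat \<Rightarrow> nat list \<Rightarrow> real"
  assumes pmf: "\<And>z. (\<lambda>L. pmf (map_pmf (bin_paths n) (rbb_path L (init L) T)) z)
      \<longlonglongrightarrow> pmf (iid_pmf n (nl_path \<mu> T)) z"
    and bounded: "\<And>k w. k < n \<Longrightarrow> \<bar>g k w\<bar> \<le> B k"
  shows "(\<lambda>L. measure_pmf.expectation (rbb_path L (init L) T) (\<lambda>p. \<Prod>k<n. g k (map (\<lambda>\<eta>. \<eta> k) p)))
     \<longlonglongrightarrow> (\<Prod>k<n. measure_pmf.expectation (nl_path \<mu> T) (g k))"
proof -
  have "\<bar>\<Prod>k<n. g k (z ! k)\<bar> \<le> (\<Prod>k<n. B k)" for z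
    by (rule abs_prod_le[where x="\<lambda>k. z ! k"]) (use bounded in auto)
  then have "(\<lambda>L. measure_pmf.expectation (map_pmf (bin_paths n) (rbb_path L (init L) T))
        (\<lambda>z. \<Prod>k<n. g k (z ! k)))
      \<longlonglongrightarrow> measure_pmf.expectation (iid_pmf n (nl_path \<mu> T)) (\<lambda>z. \<Prod>k<n. g k (z ! k))"
    by (rule tendsto_expectation_if_tendsto_pmf[OF pmf])
  then show ?thesis by (simp add: nth_bin_paths expectation_iid_pmf_prod[where f=g, OF bounded])
qed

lemma tendsto_prob_occupied:
  assumes pmf: "\<And>n z. (\<lambda>L. pmf (map_pmf (bin_paths n) (rbb_path L (init L) T)) z)
      \<longlonglongrightarrow> pmf (iid_pmf n (nl_path \<mu> T)) z"
  shows "(\<lambda>L. measure_pmf.prob (rbb_law L (init L) T) {\<eta>. \<forall>k<n. 0 < \<eta> k})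
           \<longlonglongrightarrow> measure_pmf.prob (nl_path \<mu> T) {ys. 0 < last ys} ^ n"
proof -
  have prod_indicator: "(\<Prod>k<n. indicator {w. 0 < last w} (map (\<lambda>\<eta>. \<eta> k) p))
      = (indicator {\<eta>. \<forall>k<n. 0 < \<eta> k} (last p) :: real)"
    if "p \<noteq> []" for p :: "config list"
    using that by (induction n) (auto simp: last_map indicator_def less_Suc_eq)
  have "measure_pmf.expectation (rbb_path L (init L) T)
        (\<lambda>p. \<Prod>k<n. indicator {w. 0 < last w} (map (\<lambda>\<eta>. \<eta> k) p))
      = measure_pmf.expectation (rbb_path L (init L) T) (\<lambda>p. indicator {\<eta>. \<forall>k<n. 0 < \<eta> k} (last p) :: real)"
    for L
  proof (intro integral_cong_AE AE_pmfI)
    fix p assume "p \<in> set_pmf (rbb_path L (init L) T)"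
    then have "p \<noteq> []" by (auto dest: length_rbb_path)
    then show "(\<Prod>k<n. indicator {w. 0 < last w} (map (\<lambda>\<eta>. \<eta> k) p))
        = (indicator {\<eta>. \<forall>k<n. 0 < \<eta> k} (last p) :: real)"
      by (rule prod_indicator)
  qed simp_all
  also have "\<dots> L = measure_pmf.prob (rbb_law L (init L) T) {\<eta>. \<forall>k<n. 0 < \<eta> k}" for L
    using expectation_rbb_law[of L "init L" T "indicator {\<eta>. \<forall>k<n. 0 < \<eta> k} :: config \<Rightarrow> real"]
    by simp
  finally show ?thesis
    using tendsto_expectation_bin_paths_prod[OF pmf, of n "\<lambda>_. indicator {w. 0 < last w}" "\<lambda>_. 1"]
    by (simp add: indicator_def)
qed

lemma tendsto_occ_density_rbb_path:
  assumes exch: "\<And>L. exchangeable L (rbb_law L (init L) T)"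
    and pmf: "\<And>n z. (\<lambda>L. pmf (map_pmf (bin_paths n) (rbb_path L (init L) T)) z)
      \<longlonglongrightarrow> pmf (iid_pmf n (nl_path \<mu> T)) z"
  defines "r \<equiv> measure_pmf.prob (nl_path \<mu> T) {ys. 0 < last ys}"
  shows "(\<lambda>L. measure_pmf.expectation (rbb_path L (init L) T)
      (\<lambda>p. \<bar>real (occ L (last p)) / real L - r\<bar>)) \<longlonglongrightarrow> 0"
proof -
  have "{\<eta> :: config. \<forall>k<1. 0 < \<eta> k} = {\<eta>. 0 < \<eta> 0}"
    "{\<eta> :: config. \<forall>k<2. 0 < \<eta> k} = {\<eta>. 0 < \<eta> 0 \<and> 0 < \<eta> 1}"
    by (auto simp: less_2_cases_iff)
  then have first: "(\<lambda>L. measure_pmf.prob (rbb_law L (init L) T) {\<eta>. 0 < \<eta> 0}) \<longlonglongrightarrow> r"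
    and second: "(\<lambda>L. measure_pmf.prob (rbb_law L (init L) T) {\<eta>. 0 < \<eta> 0 \<and> 0 < \<eta> 1}) \<longlonglongrightarrow> r\<^sup>2"
    using tendsto_prob_occupied[OF pmf, of 1] tendsto_prob_occupied[OF pmf, of 2] by (simp_all add: r_def)
  from tendsto_occ_density[OF exch first second]
  show ?thesis by (simp only: expectation_rbb_law)
qed

lemma tendsto_pmf_bin_paths_Suc:
  assumes exch: "\<And>L. exchangeable L (rbb_law L (init L) T)"
    and pmf: "\<And>n z. (\<lambda>L. pmf (map_pmf (bin_paths n) (rbb_path L (init L) T)) z)
      \<longlonglongrightarrow> pmf (iid_pmf n (nl_path \<mu> T)) z"
  shows "(\<lambda>L. pmf (map_pmf (bin_paths n) (rbb_path L (init L) (Suc T))) z)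
           \<longlonglongrightarrow> pmf (iid_pmf n (nl_path \<mu> (Suc T))) z"
proof -
  define r where "r = measure_pmf.prob (nl_path \<mu> T) {ys. 0 < last ys}"
  have density: "(\<lambda>L. measure_pmf.expectation (rbb_path L (init L) T)
      (\<lambda>p. \<bar>real (occ L (last p)) / real L - r\<bar>)) \<longlonglongrightarrow> 0"
    unfolding r_def by (rule tendsto_occ_density_rbb_path[OF exch pmf])
  have eventually_large: "eventually (\<lambda>L. 0 < L \<and> n \<le> L) sequentially"
    unfolding eventually_sequentially by (intro exI[of _ "Suc n"]) auto
  show ?thesis
  proof (cases "admissible n z")
    case True
    have "(\<lambda>L. measure_pmf.prob (rbb_path L (init L) T) {p. bin_paths n p = map butlast z})
        \<longlonglongrightarrow> pmf (iid_pmf n (nl_path \<mu> T)) (map butlast z)"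
      using pmf[of n "map butlast z"] by (simp add: pmf_map vimage_def)
    from tendsto_expectation_balls_marginal[OF this occ_le density, of n "arrivals z"]
    have "(\<lambda>L. measure_pmf.expectation (rbb_path L (init L) T)
        (\<lambda>p. indicator {p. bin_paths n p = map butlast z} p * balls_marginal L n (occ L (last p)) (arrivals z)))
        \<longlonglongrightarrow> pmf (iid_pmf n (nl_path \<mu> (Suc T))) z"
      using True by (simp add: r_def pmf_iid_nl_path_Suc measure_nonneg del: nl_path.simps)
    then show ?thesis
      by (rule Lim_transform_eventually)
         (use eventually_large True in \<open>auto elim: eventually_mono simp: pmf_bin_paths_rbb_path_Suc
             simp del: rbb_path.simps\<close>)
  next
    case False
    then show ?thesis
      by (intro Lim_transform_eventually[OF tendsto_const])
         (use eventually_large in \<open>auto elim: eventually_mono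
             simp: pmf_bin_paths_rbb_path_Suc pmf_iid_nl_path_Suc simp del: rbb_path.simps nl_path.simps\<close>)
  qed
qed

lemma tendsto_pmf_bin_paths:
  assumes exch: "\<And>L. exchangeable L (init L)"
    and conv: "\<And>n (\<xi> :: nat \<Rightarrow> nat).
       (\<lambda>L. measure_pmf.prob (init L) {\<eta>. \<forall>k<n. \<eta> k = \<xi> k}) \<longlonglongrightarrow> (\<Prod>k<n. pmf \<mu> (\<xi> k))"
  shows "(\<lambda>L. pmf (map_pmf (bin_paths n) (rbb_path L (init L) T)) z)
      \<longlonglongrightarrow> pmf (iid_pmf n (nl_path \<mu> T)) z"
proof (induction T arbitrary: n z)
  case 0
  show ?case by (rule tendsto_pmf_bin_paths_0[OF conv])
next
  case (Suc T)
  show ?case by (rule tendsto_pmf_bin_paths_Suc[OF exchangeable_rbb_law[OF exch] Suc.IH])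
qed

lemma tendsto_expectation_rbb_path_prod:
  fixes \<Phi> :: "nat \<Rightarrow> nat list \<Rightarrow> real"
  assumes exch: "\<And>L. exchangeable L (init L)"
    and conv: "\<And>n (\<xi> :: nat \<Rightarrow> nat).
       (\<lambda>L. measure_pmf.prob (init L) {\<eta>. \<forall>k<n. \<eta> k = \<xi> k}) \<longlonglongrightarrow> (\<Prod>k<n. pmf \<mu> (\<xi> k))"
    and bounded: "\<forall>k<n. \<exists>B. \<forall>xs. length xs = Suc T \<longrightarrow> \<bar>\<Phi> k xs\<bar> \<le> B"
  shows "(\<lambda>L. measure_pmf.expectation (rbb_path L (init L) T) (\<lambda>p. \<Prod>k<n. \<Phi> k (map (\<lambda>\<eta>. \<eta> k) p)))
           \<longlonglongrightarrow> (\<Prod>k<n. measure_pmf.expectation (nl_path \<mu> T) (\<Phi> k))"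
proof -
  obtain B where B: "\<And>k xs. k < n \<Longrightarrow> length xs = Suc T \<Longrightarrow> \<bar>\<Phi> k xs\<bar> \<le> B k"
    using bounded by metis
  define \<Phi>' where "\<Phi>' k xs = (if length xs = Suc T then \<Phi> k xs else 0)" for k xs
  have "\<bar>\<Phi>' k xs\<bar> \<le> \<bar>B k\<bar>" if "k < n" for k xs
    unfolding \<Phi>'_def using B[OF that, of xs] by auto
  from tendsto_expectation_bin_paths_prod[OF tendsto_pmf_bin_paths[OF exch conv] this]
  have "(\<lambda>L. measure_pmf.expectation (rbb_path L (init L) T) (\<lambda>p. \<Prod>k<n. \<Phi>' k (map (\<lambda>\<eta>. \<eta> k) p)))
      \<longlonglongrightarrow> (\<Prod>k<n. measure_pmf.expectation (nl_path \<mu> T) (\<Phi>' k))" .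
  moreover have "measure_pmf.expectation (rbb_path L (init L) T) (\<lambda>p. \<Prod>k<n. \<Phi>' k (map (\<lambda>\<eta>. \<eta> k) p))
      = measure_pmf.expectation (rbb_path L (init L) T) (\<lambda>p. \<Prod>k<n. \<Phi> k (map (\<lambda>\<eta>. \<eta> k) p))" for L
    by (intro integral_cong_AE AE_pmfI) (auto simp: \<Phi>'_def dest: length_rbb_path)
  moreover have "measure_pmf.expectation (nl_path \<mu> T) (\<Phi>' k)
      = measure_pmf.expectation (nl_path \<mu> T) (\<Phi> k)" for k
    by (intro integral_cong_AE AE_pmfI) (auto simp: \<Phi>'_def dest: length_nl_path)
  ultimately show ?thesis by simp
qed

theorem theorem3p1:
  fixes init :: "nat \<Rightarrow> config pmf" and \<mu> :: "nat pmf"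
  assumes support: "\<And>L. set_pmf (init L) \<subseteq> {\<eta>. \<forall>j\<ge>L. \<eta> j = 0}"
    and exch: "\<And>L \<pi>. \<pi> permutes {..<L} \<Longrightarrow> map_pmf (\<lambda>\<eta>. \<eta> \<circ> \<pi>) (init L) = init L"
    and conv: "\<And>n (\<xi> :: nat \<Rightarrow> nat).
       (\<lambda>L. measure_pmf.prob (init L) {\<eta>. \<forall>k<n. \<eta> k = \<xi> k})
         \<longlonglongrightarrow> (\<Prod>k<n. pmf \<mu> (\<xi> k))"
  shows "(\<forall>L t \<pi>. \<pi> permutes {..<L} \<longrightarrow>
            map_pmf (\<lambda>\<eta>. \<eta> \<circ> \<pi>) (rbb_law L (init L) t) = rbb_law L (init L) t)
       \<and> (\<forall>T n (\<Phi> :: nat \<Rightarrow> nat list \<Rightarrow> real).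
            (\<forall>k<n. \<exists>B. \<forall>xs. length xs = Suc T \<longrightarrow> \<bar>\<Phi> k xs\<bar> \<le> B) \<longrightarrow>
            (\<lambda>L. measure_pmf.expectation (rbb_path L (init L) T)
                    (\<lambda>p. \<Prod>k<n. \<Phi> k (map (\<lambda>\<eta>. \<eta> k) p)))
              \<longlonglongrightarrow> (\<Prod>k<n. measure_pmf.expectation (nl_path \<mu> T) (\<Phi> k)))"
proof -
  have init: "exchangeable L (init L)" for L
    using exch unfolding exchangeable_def by blast
  show ?thesis
    using exchangeable_rbb_law[OF init] tendsto_expectation_rbb_path_prod[OF init conv]
    unfolding exchangeable_def by blast
qed

end
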